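(* Let $U\subseteq L_{\mathrm{up}}$ be a set of up-links such that the sets $P_u$, $u\in U$, are pairwise disjoint, let $(C,A)$ be a (weakly) connected component of the dependency graph of $U$ (which is an arborescence), and let $k\in\mathbb{Z}_{\ge0}$. If for every directed path in $(C,A)$ with arc set $H\subseteq A$ we have $|\{u\in U\colon H\cap A_u\neq\emptyset\}|\le k$, then $C$ is $(k+1)$-thin.
   Context: Let $(G=(V,E),L,w)$ be a WTAP instance (spanning tree $G$, links $L\subseteq\binom V2$, weights $w>0$) with a fixed root $r\in V$, and let $F\subseteq L$ be a WTAP solution, i.e. $\bigcup_{\ell\in F}P_\ell=E$, where $P_\ell$ is the edge set of the tree path between the endpoints of $\ell$ and $V_\ell$ its vertex set. A link set $X$ is $k$-thin if every vertex of $V$ lies in $V_\ell$ for at most $k$ links $\ell\in X$. Ancestors of $v$ are the vertices on the $r$-$v$ path in $G$ (including $r$ and $v$); descendants are defined reciprocally. $\mathrm{apex}(\ell)$ is the vertex of $V_\ell$ closest to $r$. An up-link is a link $\{t,b\}$ with $t$ an ancestor of $b$; $L_{\mathrm{up}}$ is the set of up-links. For $v\in V$ let $B_v=\{\ell\in F\colon\mathrm{apex}(\ell)\text{ is a descendant of }v\}$. For an up-link $u=\{t,b\}$ with $t$ an ancestor of $b$, let $v_u$ be the ancestor of $t$ farthest from $r$ such that $P_u\subseteq\bigcup_{\ell\in B_{v_u}}P_\ell$, and fix $F_u\subseteq B_{v_u}$ inclusion-wise minimal with $P_u\subseteq\bigcup_{\ell\in F_u}P_\ell$. For $\ell\in F_u$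 let $P_{u,\ell}=P_u\setminus\bigcup_{\bar\ell\in F_u\setminus\{\ell\}}P_{\bar\ell}$; these sets are nonempty, pairwise disjoint, and each is the edge set of a path. Define $\ell_1\prec_u\ell_2$ iff the edges of $P_{u,\ell_1}$ appear before those of $P_{u,\ell_2}$ on the $t$-$b$ path in $G$. If $\ell_1\prec_u\cdots\prec_u\ell_q$ are the links of $F_u$, let $A_u=\{(\ell_i,\ell_{i+1})\colon i=1,\dots,q-1\}$. The dependency graph of $U\subseteq L_{\mathrm{up}}$ is the directed graph with vertex set $F$ whose arc set is the disjoint union of the $A_u$, $u\in U$. When the $P_u$, $u\in U$, are pairwise disjoint, this graph is a branching (no directed cycles, in-degrees at most one), so each weakly connected component is an arborescence. *)

theory Defs
  imports Complex_Main
begin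

definition edges_of :: "'a list \<Rightarrow> 'a set list" where
  "edges_of xs = map (\<lambda>(a,b). {a,b}) (zip xs (tl xs))"

definition is_path :: "'a set set \<Rightarrow> 'a \<Rightarrow> 'a \<Rightarrow> 'a list \<Rightarrow> bool" where
  "is_path E x y xs \<longleftrightarrow> xs \<noteq> [] \<and> hd xs = x \<and> last xs = y \<and> distinct xs \<and>
     set (edges_of xs) \<subseteq> E"

text \<open>(V,E) is a tree: a finite nonempty simple graph in which every two vertices
  are joined by exactly one simple path (i.e. connected and acyclic).\<close>
definition is_tree :: "'a set \<Rightarrow> 'a set set \<Rightarrow> bool" where
  "is_tree V E \<longleftrightarrow> finite V \<and> V \<noteq> {} \<and>
     E \<subseteq> {{a,b} | a b. a \<in> V \<and> b \<in> V \<and> a \<noteq> b} \<and>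
     (\<forall>x\<in>V. \<forall>y\<in>V. \<exists>!xs. is_path E x y xs)"

definition tpath :: "'a set set \<Rightarrow> 'a \<Rightarrow> 'a \<Rightarrow> 'a list" where
  "tpath E x y = (THE xs. is_path E x y xs)"

definition is_link :: "'a set \<Rightarrow> 'a set \<Rightarrow> bool" where
  "is_link V l \<longleftrightarrow> (\<exists>s t. l = {s,t} \<and> s \<in> V \<and> t \<in> V \<and> s \<noteq> t)"

definition Pl :: "'a set set \<Rightarrow> 'a set \<Rightarrow> 'a set set" where
  "Pl E l = \<Union>{set (edges_of (tpath E s t)) | s t. l = {s,t}}"

definition Vl :: "'a set set \<Rightarrow> 'a set \<Rightarrow> 'a set" where
  "Vl E l = \<Union>{set (tpath E s t) | s t. l = {s,t}}"

definition wtap_instance :: "'a set \<Rightarrow> 'a set set \<Rightarrow> 'a set set \<Rightarrow> ('a set \<Rightarrow> real) \<Rightarrow> bool" where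
  "wtap_instance V E L w \<longleftrightarrow> is_tree V E \<and> (\<forall>l\<in>L. is_link V l) \<and> (\<forall>l\<in>L. w l > 0)"

definition wtap_solution :: "'a set set \<Rightarrow> 'a set set \<Rightarrow> 'a set set \<Rightarrow> bool" where
  "wtap_solution E L F \<longleftrightarrow> F \<subseteq> L \<and> (\<Union>l\<in>F. Pl E l) = E"

definition thin :: "'a set \<Rightarrow> 'a set set \<Rightarrow> nat \<Rightarrow> 'a set set \<Rightarrow> bool" where
  "thin V E k X \<longleftrightarrow> (\<forall>v\<in>V. card {l\<in>X. v \<in> Vl E l} \<le> k)"

definition ancestor :: "'a set set \<Rightarrow> 'a \<Rightarrow> 'a \<Rightarrow> 'a \<Rightarrow> bool" where
  "ancestor E r a v \<longleftrightarrow> a \<in> set (tpath E r v)"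

definition depth :: "'a set set \<Rightarrow> 'a \<Rightarrow> 'a \<Rightarrow> nat" where
  "depth E r v = length (tpath E r v) - 1"

definition apex :: "'a set set \<Rightarrow> 'a \<Rightarrow> 'a set \<Rightarrow> 'a" where
  "apex E r l = (THE a. a \<in> Vl E l \<and> (\<forall>x\<in>Vl E l. depth E r a \<le> depth E r x))"

definition is_uplink :: "'a set set \<Rightarrow> 'a \<Rightarrow> 'a set \<Rightarrow> bool" where
  "is_uplink E r l \<longleftrightarrow> (\<exists>t b. l = {t,b} \<and> t \<noteq> b \<and> ancestor E r t b)"

definition Lup :: "'a set set \<Rightarrow> 'a \<Rightarrow> 'a set set \<Rightarrow> 'a set set" where
  "Lup E r L = {l\<in>L. is_uplink E r l}"

definition utop :: "'a set set \<Rightarrow> 'a \<Rightarrow> 'a set \<Rightarrow> 'a" where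
  "utop E r u = (THE t. \<exists>b. u = {t,b} \<and> t \<noteq> b \<and> ancestor E r t b)"

definition ubot :: "'a set set \<Rightarrow> 'a \<Rightarrow> 'a set \<Rightarrow> 'a" where
  "ubot E r u = (THE b. u = {utop E r u, b} \<and> utop E r u \<noteq> b \<and> ancestor E r (utop E r u) b)"

definition Bset :: "'a set set \<Rightarrow> 'a \<Rightarrow> 'a set set \<Rightarrow> 'a \<Rightarrow> 'a set set" where
  "Bset E r F v = {l\<in>F. ancestor E r v (apex E r l)}"

definition covers :: "'a set set \<Rightarrow> 'a set set \<Rightarrow> 'a set set \<Rightarrow> bool" where
  "covers E X S \<longleftrightarrow> S \<subseteq> (\<Union>l\<in>X. Pl E l)"

definition vu :: "'a set set \<Rightarrow> 'a \<Rightarrow> 'a set set \<Rightarrow> 'a set \<Rightarrow> 'a" where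
  "vu E r F u = (THE v. ancestor E r v (utop E r u) \<and> covers E (Bset E r F v) (Pl E u) \<and>
      (\<forall>x. ancestor E r x (utop E r u) \<and> covers E (Bset E r F x) (Pl E u) \<longrightarrow>
           depth E r x \<le> depth E r v))"

definition valid_Fsel :: "'a set set \<Rightarrow> 'a \<Rightarrow> 'a set set \<Rightarrow> 'a set set \<Rightarrow> ('a set \<Rightarrow> 'a set set) \<Rightarrow> bool" where
  "valid_Fsel E r F U Fs \<longleftrightarrow> (\<forall>u\<in>U.
      Fs u \<subseteq> Bset E r F (vu E r F u) \<and> covers E (Fs u) (Pl E u) \<and>
      (\<forall>X. X \<subset> Fs u \<longrightarrow> \<not> covers E X (Pl E u)))"

definition Pul :: "'a set set \<Rightarrow> ('a set \<Rightarrow> 'a set set) \<Rightarrow> 'a set \<Rightarrow> 'a set \<Rightarrow> 'a set set" where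
  "Pul E Fs u l = Pl E u - (\<Union>l'\<in>Fs u - {l}. Pl E l')"

definition prec_u :: "'a set set \<Rightarrow> 'a \<Rightarrow> ('a set \<Rightarrow> 'a set set) \<Rightarrow> 'a set \<Rightarrow> 'a set \<Rightarrow> 'a set \<Rightarrow> bool" where
  "prec_u E r Fs u l1 l2 \<longleftrightarrow>
     (let es = edges_of (tpath E (utop E r u) (ubot E r u)) in
      \<forall>i j. i < length es \<and> j < length es \<and> es ! i \<in> Pul E Fs u l1 \<and> es ! j \<in> Pul E Fs u l2
            \<longrightarrow> i < j)"

definition Au :: "'a set set \<Rightarrow> 'a \<Rightarrow> ('a set \<Rightarrow> 'a set set) \<Rightarrow> 'a set \<Rightarrow> ('a set \<times> 'a set) set" where
  "Au E r Fs u = {(l1,l2). l1 \<in> Fs u \<and> l2 \<in> Fs u \<and> l1 \<noteq> l2 \<and> prec_u E r Fs u l1 l2 \<and>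
      \<not>(\<exists>l3\<in>Fs u. l3 \<noteq> l1 \<and> l3 \<noteq> l2 \<and> prec_u E r Fs u l1 l3 \<and> prec_u E r Fs u l3 l2)}"

text \<open>Arcs of the dependency graph of U (vertex set F): disjoint union of the A_u,
  each arc labelled by its u, represented as (u, tail, head).\<close>
definition dep_arcs :: "'a set set \<Rightarrow> 'a \<Rightarrow> ('a set \<Rightarrow> 'a set set) \<Rightarrow> 'a set set \<Rightarrow> ('a set \<times> 'a set \<times> 'a set) set" where
  "dep_arcs E r Fs U = {(u,l1,l2). u \<in> U \<and> (l1,l2) \<in> Au E r Fs u}"

definition arc_rel :: "('b \<times> 'c \<times> 'c) set \<Rightarrow> ('c \<times> 'c) set" where
  "arc_rel D = {(x,y). \<exists>u. (u,x,y) \<in> D}"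

definition weak_component :: "'c set \<Rightarrow> ('b \<times> 'c \<times> 'c) set \<Rightarrow> 'c set \<Rightarrow> bool" where
  "weak_component F D C \<longleftrightarrow>
     (\<exists>x\<in>F. C = {y\<in>F. (x,y) \<in> (arc_rel D \<union> (arc_rel D)\<inverse>)\<^sup>*})"

definition comp_arcs :: "('b \<times> 'c \<times> 'c) set \<Rightarrow> 'c set \<Rightarrow> ('b \<times> 'c \<times> 'c) set" where
  "comp_arcs D C = {(u,x,y) \<in> D. x \<in> C \<and> y \<in> C}"

definition dipath :: "('b \<times> 'c \<times> 'c) set \<Rightarrow> ('b \<times> 'c \<times> 'c) list \<Rightarrow> bool" where
  "dipath A as \<longleftrightarrow> as \<noteq> [] \<and> set as \<subseteq> A \<and>
     (\<forall>i. Suc i < length as \<longrightarrow> snd (snd (as ! i)) = fst (snd (as ! Suc i))) \<and>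
     distinct (fst (snd (hd as)) # map (\<lambda>a. snd (snd a)) as)"

end

(*
  Along an arc (n, l) of A_u the apex of l lies strictly inside both P_u and P_n, so apices
  strictly descend along the arcs of the dependency graph and every component is rooted.
  Fix a vertex x. The links of the component whose path contains x are pairwise comparable:
  at a fork whose two out-arcs carry different labels u and u', the links with apex below the
  deeper head already cover P_u', contradicting the choice of v_u'. Hence these links lie on
  one directed path. Sending each of them but the last to the label of its out-arc on that
  path is injective: with a repeated label u, a lower endpoint of P_(u,l) for the later tail l
  would also lie on the path of the earlier tail. So there are at most k + 1 such links.
*)
theory Submission
  imports Defs
begin

section \<open>Edge lists of vertex sequences\<close>

lemma edges_of_Nil [simp]: "edges_of [] = []"
  by (simp add: edges_of_def)

lemma edges_of_singleton [simp]: "edges_of [x] = []"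
  by (simp add: edges_of_def)

lemma edges_of_Cons_Cons [simp]: "edges_of (x # y # xs) = {x, y} # edges_of (y # xs)"
  by (simp add: edges_of_def)

lemma length_edges_of [simp]: "length (edges_of xs) = length xs - 1"
  by (simp add: edges_of_def)

lemma nth_edges_of: "Suc i < length xs \<Longrightarrow> edges_of xs ! i = {xs ! i, xs ! Suc i}"
  by (simp add: edges_of_def nth_tl)

lemma set_edges_of: "set (edges_of xs) = {{xs ! i, xs ! Suc i} | i. Suc i < length xs}"
proof (intro set_eqI iffI)
  fix e assume "e \<in> set (edges_of xs)"
  then obtain i where "i < length (edges_of xs)" "e = edges_of xs ! i"
    by (auto simp: in_set_conv_nth)
  then show "e \<in> {{xs ! i, xs ! Suc i} | i. Suc i < length xs}"
    by (auto simp: nth_edges_of)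
next
  fix e assume "e \<in> {{xs ! i, xs ! Suc i} | i. Suc i < length xs}"
  then obtain i where "Suc i < length xs" "e = {xs ! i, xs ! Suc i}" by blast
  then show "e \<in> set (edges_of xs)"
    by (metis length_edges_of less_diff_conv nth_edges_of nth_mem plus_1_eq_Suc add.commute)
qed

lemma edges_of_append: "edges_of (xs @ y # ys) = edges_of (xs @ [y]) @ edges_of (y # ys)"
  by (induction xs rule: induct_list012) auto

lemma edges_of_rev: "edges_of (rev xs) = rev (edges_of xs)"
proof (induction xs rule: induct_list012)
  case (3 x y xs)
  have "edges_of (rev (x # y # xs)) = edges_of (rev (y # xs) @ [x])" by simp
  also have "\<dots> = edges_of (rev xs @ [y]) @ edges_of [y, x]"
    using edges_of_append[of "rev xs" y "[x]"] by simp
  finally show ?case using "3.IH"(2) by (simp add: insert_commute)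
qed simp_all

lemma set_edges_of_take_subset: "set (edges_of (take n xs)) \<subseteq> set (edges_of xs)"
  by (auto simp: set_edges_of)

lemma set_edges_of_drop_subset: "set (edges_of (drop n xs)) \<subseteq> set (edges_of xs)"
proof
  fix e assume "e \<in> set (edges_of (drop n xs))"
  then obtain i where "Suc i < length (drop n xs)" "e = {drop n xs ! i, drop n xs ! Suc i}"
    by (auto simp: set_edges_of)
  then have "Suc (n + i) < length xs" "e = {xs ! (n + i), xs ! Suc (n + i)}" by auto
  then show "e \<in> set (edges_of xs)" unfolding set_edges_of by blast
qed

lemma set_edges_of_join:
  assumes "A \<noteq> []" "B \<noteq> []" "hd A = hd B"
  shows "set (edges_of (rev A @ tl B)) = set (edges_of A) \<union> set (edges_of B)"
proof -
  obtain m B' where B: "B = m # B'" and m: "hd A = m" using assms by (cases B) auto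
  define A' where "A' = butlast (rev A)"
  have A: "rev A = A' @ [m]"
    using append_butlast_last_id[of "rev A"] assms(1) m by (simp add: A'_def last_rev)
  have "edges_of (rev A @ tl B) = edges_of (rev A) @ edges_of B"
    using edges_of_append[of A' m B'] by (simp add: A B)
  then show ?thesis by (simp add: edges_of_rev)
qed

lemma is_path_take:
  assumes "is_path E x y xs" "i < length xs"
  shows "is_path E x (xs ! i) (take (Suc i) xs)"
proof -
  have "take (Suc i) xs = take i xs @ [xs ! i]" using assms(2) by (simp add: take_Suc_conv_app_nth)
  then have "last (take (Suc i) xs) = xs ! i" by simp
  then show ?thesis using assms set_edges_of_take_subset[of "Suc i" xs]
    by (auto simp: is_path_def)
qed

lemma is_path_drop:
  assumes "is_path E x y xs" "i < length xs"
  shows "is_path E (xs ! i) y (drop i xs)"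
  using assms set_edges_of_drop_subset[of i xs]
  by (auto simp: is_path_def hd_drop_conv_nth)

lemma is_path_join:
  assumes A: "is_path E m s A" and B: "is_path E m t B" and meet: "set A \<inter> set B = {m}"
  shows "is_path E s t (rev A @ tl B)"
proof -
  obtain B' where B': "B = m # B'" using B by (cases B) (auto simp: is_path_def)
  have "A \<noteq> []" "hd A = hd B" using A B by (auto simp: is_path_def)
  then have edges: "set (edges_of (rev A @ tl B)) \<subseteq> E"
    using set_edges_of_join[of A B] A B by (auto simp: is_path_def)
  have "last (rev A @ tl B) = t"
    using A B B' by (cases B') (auto simp: is_path_def last_rev)
  moreover have "distinct (rev A @ tl B)" using A B B' meet by (auto simp: is_path_def)
  ultimately show ?thesis
    using A edges by (auto simp: is_path_def hd_rev)
qed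

section \<open>Rooted trees\<close>

definition parent_edge :: "'a set set \<Rightarrow> 'a \<Rightarrow> 'a \<Rightarrow> 'a set" where
  "parent_edge E r w = {tpath E r w ! (depth E r w - 1), w}"

definition lca :: "'a set set \<Rightarrow> 'a \<Rightarrow> 'a \<Rightarrow> 'a \<Rightarrow> 'a" where
  "lca E r s t = (THE m. ancestor E r m s \<and> ancestor E r m t \<and>
      (\<forall>c. ancestor E r c s \<and> ancestor E r c t \<longrightarrow> ancestor E r c m))"

text \<open>Edge sets of tree paths are represented by the lower endpoints of their edges.\<close>

definition lower_ends :: "'a set set \<Rightarrow> 'a \<Rightarrow> 'a set \<Rightarrow> 'a set" where
  "lower_ends E r l = Vl E l - {apex E r l}"

locale rooted_tree =
  fixes V :: "'a set" and E :: "'a set set" and r :: 'a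
  assumes tree: "is_tree V E" and root_in_V: "r \<in> V"
begin

abbreviation rpath :: "'a \<Rightarrow> 'a list" where "rpath v \<equiv> tpath E r v"
abbreviation anc :: "'a \<Rightarrow> 'a \<Rightarrow> bool" where "anc a v \<equiv> ancestor E r a v"
abbreviation dep :: "'a \<Rightarrow> nat" where "dep v \<equiv> depth E r v"

lemma ex1_path: "x \<in> V \<Longrightarrow> y \<in> V \<Longrightarrow> \<exists>!xs. is_path E x y xs"
  using tree unfolding is_tree_def by blast

lemma edge_ends_in_V: "{a, b} \<in> E \<Longrightarrow> a \<in> V \<and> b \<in> V"
  using tree unfolding is_tree_def by (auto simp: doubleton_eq_iff)

lemma is_path_tpath: "x \<in> V \<Longrightarrow> y \<in> V \<Longrightarrow> is_path E x y (tpath E x y)"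
  unfolding tpath_def by (rule theI', rule ex1_path)

lemma tpath_eqI: "x \<in> V \<Longrightarrow> y \<in> V \<Longrightarrow> is_path E x y xs \<Longrightarrow> tpath E x y = xs"
  unfolding tpath_def by (rule the1_equality[OF ex1_path])

lemma path_in_V: assumes "is_path E x y xs" "x \<in> V" shows "set xs \<subseteq> V"
proof
  fix z assume "z \<in> set xs"
  then obtain i where i: "i < length xs" "xs ! i = z" by (auto simp: in_set_conv_nth)
  have E: "set (edges_of xs) \<subseteq> E" using assms by (simp add: is_path_def)
  show "z \<in> V"
  proof (cases i)
    case 0
    then show ?thesis using assms i by (auto simp: is_path_def hd_conv_nth)
  next
    case (Suc j)
    then have "{xs ! j, xs ! Suc j} \<in> E" using E i by (auto simp: set_edges_of)
    then show ?thesis using edge_ends_in_V i Suc by auto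
  qed
qed

lemma is_path_rpath: "v \<in> V \<Longrightarrow> is_path E r v (rpath v)"
  using is_path_tpath root_in_V by blast

lemma rpath_subset_V: "v \<in> V \<Longrightarrow> set (rpath v) \<subseteq> V"
  using path_in_V[OF is_path_rpath root_in_V] .

lemma length_rpath: "v \<in> V \<Longrightarrow> length (rpath v) = Suc (dep v)"
  using is_path_rpath by (auto simp: depth_def is_path_def)

lemma rpath_nth_0: assumes "v \<in> V" shows "rpath v ! 0 = r"
  using is_path_rpath[OF assms] by (auto simp: is_path_def hd_conv_nth)

lemma rpath_nth_depth: assumes "v \<in> V" shows "rpath v ! dep v = v"
  using is_path_rpath[OF assms] length_rpath[OF assms] by (auto simp: is_path_def last_conv_nth)

lemma rpath_of_nth_rpath:
  assumes "v \<in> V" "i < length (rpath v)"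
  shows "rpath (rpath v ! i) = take (Suc i) (rpath v)"
proof -
  have "rpath v ! i \<in> V" using assms rpath_subset_V nth_mem by blast
  then show ?thesis using assms is_path_take[OF is_path_rpath] by (intro tpath_eqI root_in_V) auto
qed

lemma ancestor_nth_rpath:
  assumes "v \<in> V" "j \<le> dep v"
  shows "anc (rpath v ! j) v" "dep (rpath v ! j) = j"
    and "rpath (rpath v ! j) = take (Suc j) (rpath v)" "rpath v ! j \<in> V"
proof -
  have j: "j < length (rpath v)" using assms length_rpath by auto
  then show t: "rpath (rpath v ! j) = take (Suc j) (rpath v)"
    using rpath_of_nth_rpath assms by blast
  show "dep (rpath v ! j) = j" unfolding depth_def using t j by simp
  show "anc (rpath v ! j) v" "rpath v ! j \<in> V"
    using j rpath_subset_V[OF assms(1)] by (auto simp: ancestor_def)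
qed

lemma ancestorD:
  assumes "v \<in> V" "anc a v"
  shows "a \<in> V" "dep a \<le> dep v" "rpath v ! dep a = a" "rpath a = take (Suc (dep a)) (rpath v)"
proof -
  obtain i where i: "i < length (rpath v)" "rpath v ! i = a"
    using assms by (auto simp: ancestor_def in_set_conv_nth)
  then have "i \<le> dep v" using length_rpath[OF assms(1)] by auto
  from ancestor_nth_rpath[OF assms(1) this] i
  show "a \<in> V" "dep a \<le> dep v" "rpath v ! dep a = a" "rpath a = take (Suc (dep a)) (rpath v)"
    using \<open>i \<le> dep v\<close> by auto
qed

lemma ancestor_refl: "v \<in> V \<Longrightarrow> anc v v"
  using rpath_nth_depth ancestor_nth_rpath by fastforce

lemma root_ancestor: "v \<in> V \<Longrightarrow> anc r v"
  using rpath_nth_0 ancestor_nth_rpath by fastforce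

lemma ancestor_trans: "c \<in> V \<Longrightarrow> anc a b \<Longrightarrow> anc b c \<Longrightarrow> anc a c"
  using ancestorD(4) by (auto simp: ancestor_def dest: in_set_takeD)

lemma ancestor_depth_inj: "v \<in> V \<Longrightarrow> anc a v \<Longrightarrow> anc b v \<Longrightarrow> dep a = dep b \<Longrightarrow> a = b"
  using ancestorD(3) by metis

lemma ancestor_antisym: "b \<in> V \<Longrightarrow> anc a b \<Longrightarrow> anc b a \<Longrightarrow> a = b"
  using ancestorD(1,2) ancestor_depth_inj ancestor_refl by (metis le_antisym)

lemma ancestor_by_depth:
  assumes "v \<in> V" "anc a v" "anc b v" "dep a \<le> dep b"
  shows "anc a b"
proof -
  have "dep b < length (rpath v)" using ancestorD(2)[OF assms(1,3)] length_rpath[OF assms(1)] by simp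
  then have "take (Suc (dep b)) (rpath v) ! dep a = a" "dep a < length (take (Suc (dep b)) (rpath v))"
    using ancestorD(3)[OF assms(1,2)] assms(4) by auto
  then show ?thesis using ancestorD(4)[OF assms(1,3)] by (metis ancestor_def nth_mem)
qed

lemma ancestors_linear: "v \<in> V \<Longrightarrow> anc a v \<Longrightarrow> anc b v \<Longrightarrow> anc a b \<or> anc b a"
  using ancestor_by_depth nat_le_linear by blast

lemma depth_strict_mono: "b \<in> V \<Longrightarrow> anc a b \<Longrightarrow> a \<noteq> b \<Longrightarrow> dep a < dep b"
  using ancestorD(2) ancestor_depth_inj ancestor_refl by (metis le_neq_implies_less)

lemma ancestors_depth_less:
  "v \<in> V \<Longrightarrow> anc a v \<Longrightarrow> anc b v \<Longrightarrow> dep a < dep b \<Longrightarrow> anc a b \<and> a \<noteq> b"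
  using ancestor_by_depth by auto

lemma ancestors_depth_neq:
  "v \<in> V \<Longrightarrow> anc a v \<Longrightarrow> anc b v \<Longrightarrow> a \<noteq> b \<Longrightarrow> dep a < dep b \<or> dep b < dep a"
  using ancestor_depth_inj nat_neq_iff by blast

lemma depth_root: "dep r = 0"
  using tpath_eqI[OF root_in_V root_in_V, of "[r]"] by (simp add: is_path_def depth_def)

lemma depth_eq_0: "v \<in> V \<Longrightarrow> dep v = 0 \<Longrightarrow> v = r"
  using rpath_nth_depth rpath_nth_0 by metis

lemma inj_on_parent_edge: "inj_on (parent_edge E r) (V - {r})"
proof
  fix w w' assume w: "w \<in> V - {r}" and w': "w' \<in> V - {r}"
    and eq: "parent_edge E r w = parent_edge E r w'"
  have parent: "dep (rpath x ! (dep x - 1)) = dep x - 1" "dep x \<noteq> 0" if "x \<in> V - {r}" for x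
    using that ancestor_nth_rpath(2)[of x "dep x - 1"] depth_eq_0 by auto
  show "w = w'"
  proof (rule ccontr)
    assume "w \<noteq> w'"
    then have "w = rpath w' ! (dep w' - 1)" "w' = rpath w ! (dep w - 1)"
      using eq by (auto simp: parent_edge_def doubleton_eq_iff)
    then show False using parent[OF w] parent[OF w'] by simp
  qed
qed

lemma set_drop_rpath:
  assumes "v \<in> V" "anc m v"
  shows "set (drop (dep m) (rpath v)) = {w. anc w v \<and> anc m w}"
proof (intro set_eqI iffI)
  fix w assume "w \<in> set (drop (dep m) (rpath v))"
  then obtain i where i: "i < length (drop (dep m) (rpath v))" "drop (dep m) (rpath v) ! i = w"
    by (auto simp: in_set_conv_nth)
  then have le: "dep m + i \<le> dep v" and "rpath v ! (dep m + i) = w"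
    using length_rpath[OF assms(1)] by auto
  with ancestor_nth_rpath[OF assms(1) le] have "anc w v" "dep w = dep m + i" by auto
  then show "w \<in> {w. anc w v \<and> anc m w}" using ancestor_by_depth[OF assms] by simp
next
  fix w assume "w \<in> {w. anc w v \<and> anc m w}"
  then have w: "anc w v" "anc m w" by auto
  have "dep m \<le> dep w" using ancestorD(1,2) assms(1) w by blast
  then have "drop (dep m) (rpath v) ! (dep w - dep m) = w"
    and "dep w - dep m < length (drop (dep m) (rpath v))"
    using ancestorD(2,3)[OF assms(1) w(1)] length_rpath[OF assms(1)] by auto
  then show "w \<in> set (drop (dep m) (rpath v))" by (metis nth_mem)
qed

lemma is_path_drop_rpath: "v \<in> V \<Longrightarrow> anc m v \<Longrightarrow> is_path E m v (drop (dep m) (rpath v))"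
  using is_path_drop[OF is_path_rpath, of v "dep m"] length_rpath ancestorD by fastforce

lemma nth_edges_of_drop_rpath:
  assumes "v \<in> V" "Suc (d + i) \<le> dep v"
  shows "edges_of (drop d (rpath v)) ! i = parent_edge E r (rpath v ! Suc (d + i))"
    and "Suc i < length (drop d (rpath v))"
proof -
  show l: "Suc i < length (drop d (rpath v))" using assms length_rpath by simp
  have "edges_of (drop d (rpath v)) ! i = {rpath v ! (d + i), rpath v ! Suc (d + i)}"
    using nth_edges_of[OF l] assms length_rpath by simp
  then show "edges_of (drop d (rpath v)) ! i = parent_edge E r (rpath v ! Suc (d + i))"
    using ancestor_nth_rpath(2,3)[OF assms] by (simp add: parent_edge_def)
qed

lemma set_edges_of_drop_rpath:
  assumes "v \<in> V" "anc m v"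
  shows "set (edges_of (drop (dep m) (rpath v))) = parent_edge E r ` {w. anc w v \<and> anc m w \<and> w \<noteq> m}"
proof (intro set_eqI iffI)
  fix e assume "e \<in> set (edges_of (drop (dep m) (rpath v)))"
  then obtain i where i: "i < length (rpath v) - dep m - 1"
      "e = edges_of (drop (dep m) (rpath v)) ! i"
    by (auto simp: in_set_conv_nth)
  define w where "w = rpath v ! Suc (dep m + i)"
  have le: "Suc (dep m + i) \<le> dep v" using i length_rpath[OF assms(1)] by auto
  have "e = parent_edge E r w" using nth_edges_of_drop_rpath[OF assms(1) le] i by (simp add: w_def)
  moreover have "anc w v" "dep w = Suc (dep m + i)" using ancestor_nth_rpath[OF assms(1) le] by (auto simp: w_def)
  moreover then have "anc m w" using ancestor_by_depth[OF assms] by simp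
  ultimately show "e \<in> parent_edge E r ` {w. anc w v \<and> anc m w \<and> w \<noteq> m}" by force
next
  fix e assume "e \<in> parent_edge E r ` {w. anc w v \<and> anc m w \<and> w \<noteq> m}"
  then obtain w where w: "anc w v" "anc m w" "w \<noteq> m" "e = parent_edge E r w" by blast
  have "dep m < dep w" using depth_strict_mono ancestorD(1)[OF assms(1) w(1)] w by blast
  then have le: "Suc (dep m + (dep w - Suc (dep m))) \<le> dep v" and eq: "Suc (dep m + (dep w - Suc (dep m))) = dep w"
    using ancestorD(2)[OF assms(1) w(1)] by auto
  have "e = edges_of (drop (dep m) (rpath v)) ! (dep w - Suc (dep m))"
    using nth_edges_of_drop_rpath(1)[OF assms(1) le] ancestorD(3)[OF assms(1) w(1)] w(4)
    by (simp only: eq)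
  then show "e \<in> set (edges_of (drop (dep m) (rpath v)))"
    using nth_edges_of_drop_rpath(2)[OF assms(1) le] by (simp del: length_drop)
qed

lemma deepest_ancestor:
  assumes "t \<in> V" "P r"
  shows "\<exists>!v. (anc v t \<and> P v) \<and> (\<forall>x. anc x t \<and> P x \<longrightarrow> dep x \<le> dep v)"
proof -
  define M where "M = {v. anc v t \<and> P v}"
  have fin: "finite M" unfolding M_def ancestor_def by (rule finite_subset[of _ "set (rpath t)"]) auto
  moreover have "r \<in> M" using root_ancestor assms by (simp add: M_def)
  ultimately have "Max (dep ` M) \<in> dep ` M" by (intro Max_in) auto
  have le_Max: "\<And>x. x \<in> M \<Longrightarrow> dep x \<le> Max (dep ` M)" using fin by simp
  from \<open>Max (dep ` M) \<in> dep ` M\<close> obtain v where v: "v \<in> M" "dep v = Max (dep ` M)" by auto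
  show ?thesis
  proof (rule ex1I)
    show "(anc v t \<and> P v) \<and> (\<forall>x. anc x t \<and> P x \<longrightarrow> dep x \<le> dep v)"
      using v le_Max by (simp add: M_def)
  next
    fix v' assume "(anc v' t \<and> P v') \<and> (\<forall>x. anc x t \<and> P x \<longrightarrow> dep x \<le> dep v')"
    moreover then have "dep v' = dep v" using v le_Max[of v'] by (force simp: M_def)
    ultimately show "v' = v" using ancestor_depth_inj[OF assms(1)] v(1) by (simp add: M_def)
  qed
qed

lemma lca:
  assumes "s \<in> V" "t \<in> V"
  shows "anc (lca E r s t) s" "anc (lca E r s t) t"
    and "\<And>c. anc c s \<Longrightarrow> anc c t \<Longrightarrow> anc c (lca E r s t)"
proof -
  have deepest_iff_greatest: "(\<forall>c. anc c s \<and> anc c t \<longrightarrow> dep c \<le> dep m) \<longleftrightarrow>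
      (\<forall>c. anc c s \<and> anc c t \<longrightarrow> anc c m)" if "anc m s" for m
    using ancestor_by_depth[OF assms(1) _ that] ancestorD(2)[OF ancestorD(1)[OF assms(1) that]] by metis
  have "\<exists>!m. (anc m s \<and> anc m t) \<and> (\<forall>c. anc c s \<and> anc c t \<longrightarrow> dep c \<le> dep m)"
    using deepest_ancestor[OF assms(1), of "\<lambda>m. anc m t"] root_ancestor[OF assms(2)] .
  then have "\<exists>!m. anc m s \<and> anc m t \<and> (\<forall>c. anc c s \<and> anc c t \<longrightarrow> anc c m)"
    using deepest_iff_greatest by (metis (no_types, lifting))
  then have "anc (lca E r s t) s \<and> anc (lca E r s t) t \<and>
      (\<forall>c. anc c s \<and> anc c t \<longrightarrow> anc c (lca E r s t))"
    unfolding lca_def by (rule theI')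
  then show "anc (lca E r s t) s" "anc (lca E r s t) t"
    and "\<And>c. anc c s \<Longrightarrow> anc c t \<Longrightarrow> anc c (lca E r s t)" by blast+
qed

lemma lca_commute: "lca E r s t = lca E r t s"
  unfolding lca_def by metis

lemma tpath_via_lca:
  assumes s: "s \<in> V" and t: "t \<in> V"
  defines "m \<equiv> lca E r s t"
  shows "tpath E s t = rev (drop (dep m) (rpath s)) @ tl (drop (dep m) (rpath t))"
proof (rule tpath_eqI[OF s t], rule is_path_join)
  have ms: "anc m s" and mt: "anc m t" using lca[OF s t] by (auto simp: m_def)
  show "is_path E m s (drop (dep m) (rpath s))" "is_path E m t (drop (dep m) (rpath t))"
    using is_path_drop_rpath s t ms mt by blast+
  have "z = m" if "anc z s" "anc z t" "anc m z" for z
    using ancestor_antisym[OF ancestorD(1)[OF s ms] lca(3)[OF s t that(1,2), folded m_def] that(3)] .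
  then show "set (drop (dep m) (rpath s)) \<inter> set (drop (dep m) (rpath t)) = {m}"
    using set_drop_rpath[OF s ms] set_drop_rpath[OF t mt] ms mt
      ancestor_refl[OF ancestorD(1)[OF s ms]] by auto
qed

lemma set_tpath:
  assumes "s \<in> V" "t \<in> V"
  shows "set (tpath E s t) = {v. anc (lca E r s t) v \<and> (anc v s \<or> anc v t)}"
proof -
  define m where "m = lca E r s t"
  have ms: "anc m s" and mt: "anc m t" using lca[OF assms] by (auto simp: m_def)
  have "m \<in> set (drop (dep m) (rpath s))"
    using is_path_drop_rpath[OF assms(1) ms] by (metis hd_in_set is_path_def)
  moreover obtain B where B: "drop (dep m) (rpath t) = m # B"
    using is_path_drop_rpath[OF assms(2) mt] by (cases "drop (dep m) (rpath t)") (auto simp: is_path_def)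
  ultimately have "set (tpath E s t) = set (drop (dep m) (rpath s)) \<union> set (drop (dep m) (rpath t))"
    unfolding tpath_via_lca[OF assms] m_def[symmetric] B by auto
  then show ?thesis using set_drop_rpath[OF assms(1) ms] set_drop_rpath[OF assms(2) mt]
    by (auto simp: m_def)
qed

lemma set_edges_of_tpath:
  assumes "s \<in> V" "t \<in> V"
  defines "m \<equiv> lca E r s t"
  shows "set (edges_of (tpath E s t)) = parent_edge E r ` {v. anc m v \<and> v \<noteq> m \<and> (anc v s \<or> anc v t)}"
proof -
  have ms: "anc m s" and mt: "anc m t" using lca[OF assms(1,2)] by (auto simp: m_def)
  have "is_path E m s (drop (dep m) (rpath s))" "is_path E m t (drop (dep m) (rpath t))"
    using is_path_drop_rpath assms(1,2) ms mt by blast+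
  then have "set (edges_of (tpath E s t)) =
      set (edges_of (drop (dep m) (rpath s))) \<union> set (edges_of (drop (dep m) (rpath t)))"
    unfolding tpath_via_lca[OF assms(1,2)] m_def[symmetric]
    by (intro set_edges_of_join) (auto simp: is_path_def)
  then show ?thesis
    using set_edges_of_drop_rpath[OF assms(1) ms] set_edges_of_drop_rpath[OF assms(2) mt] by auto
qed

lemma doubleton_pairs: "{f s' t' | s' t'. {s, t} = {s', t'}} = {f s t, f t s}"
  by (auto simp: doubleton_eq_iff)

lemma link_via_lca:
  assumes "s \<in> V" "t \<in> V"
  defines "m \<equiv> lca E r s t"
  shows "Vl E {s, t} = {v. anc m v \<and> (anc v s \<or> anc v t)}"
    and "Pl E {s, t} = parent_edge E r ` {v. anc m v \<and> v \<noteq> m \<and> (anc v s \<or> anc v t)}"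
    and "apex E r {s, t} = m"
    and "lower_ends E r {s, t} = {v. anc m v \<and> v \<noteq> m \<and> (anc v s \<or> anc v t)}"
proof -
  show Vl: "Vl E {s, t} = {v. anc m v \<and> (anc v s \<or> anc v t)}"
    unfolding Vl_def doubleton_pairs using set_tpath assms lca_commute[of t s] by auto
  show "Pl E {s, t} = parent_edge E r ` {v. anc m v \<and> v \<noteq> m \<and> (anc v s \<or> anc v t)}"
    unfolding Pl_def doubleton_pairs using set_edges_of_tpath assms lca_commute[of t s] by auto
  have mV: "m \<in> V" and ms: "anc m s" using lca(1)[OF assms(1,2)] ancestorD(1)[OF assms(1)]
    by (auto simp: m_def)
  have below: "x \<in> V" "anc m x" if "x \<in> Vl E {s, t}" for x
    using that Vl ancestorD(1)[OF assms(1)] ancestorD(1)[OF assms(2)] by auto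
  have m: "m \<in> Vl E {s, t}" using Vl ancestor_refl[OF mV] ms by simp
  have m_min: "\<forall>x\<in>Vl E {s, t}. dep m \<le> dep x" using below ancestorD(2) by blast
  have "a = m" if a: "a \<in> Vl E {s, t}" "\<forall>x\<in>Vl E {s, t}. dep a \<le> dep x" for a
  proof -
    have "dep a = dep m" using a(2) m m_min a(1) by (simp add: le_antisym)
    then show ?thesis
      using ancestor_depth_inj[OF below(1)[OF a(1)] ancestor_refl[OF below(1)[OF a(1)]] below(2)[OF a(1)]]
      by simp
  qed
  then show ap: "apex E r {s, t} = m"
    unfolding apex_def using m m_min by (intro the_equality) blast+
  show "lower_ends E r {s, t} = {v. anc m v \<and> v \<noteq> m \<and> (anc v s \<or> anc v t)}"
    unfolding lower_ends_def ap Vl by auto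
qed

context
  fixes l assumes l: "is_link V l"
begin

lemma apex_in_Vl: "apex E r l \<in> Vl E l"
  and Vl_subset_V: "Vl E l \<subseteq> V"
  and ancestor_apex: "x \<in> Vl E l \<Longrightarrow> anc (apex E r l) x"
  and Pl_eq_parent_edges: "Pl E l = parent_edge E r ` lower_ends E r l"
  and lower_ends_subset: "lower_ends E r l \<subseteq> V - {r}"
proof -
  obtain s t where st: "l = {s, t}" "s \<in> V" "t \<in> V" using l by (auto simp: is_link_def)
  define m where "m = lca E r s t"
  have ms: "anc m s" and mV: "m \<in> V" using lca(1)[OF st(2,3)] ancestorD(1)[OF st(2)] by (auto simp: m_def)
  note via = link_via_lca[OF st(2,3), folded m_def st(1)]
  show "apex E r l \<in> Vl E l" using via ancestor_refl[OF mV] ms by simp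
  show V: "Vl E l \<subseteq> V" using via ancestorD(1) st by blast
  show "x \<in> Vl E l \<Longrightarrow> anc (apex E r l) x" for x using via by simp
  show "Pl E l = parent_edge E r ` lower_ends E r l" using via by simp
  have "w \<noteq> r" if "anc m w" "w \<noteq> m" for w
    using that ancestor_antisym[OF mV, of w] root_ancestor[OF mV] by blast
  then show "lower_ends E r l \<subseteq> V - {r}"
    using V via(1,4) by (auto simp: st(1))
qed

lemma apex_in_V: "apex E r l \<in> V"
  using apex_in_Vl Vl_subset_V by blast

lemma lower_endsI:
  assumes "x \<in> Vl E l" "anc (apex E r l) w" "w \<noteq> apex E r l" "anc w x"
  shows "w \<in> lower_ends E r l"
proof -
  obtain s t where st: "l = {s, t}" "s \<in> V" "t \<in> V" using l by (auto simp: is_link_def)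
  note via = link_via_lca[OF st(2,3), folded st(1)]
  have "anc x s \<or> anc x t" using assms(1) via(1) by simp
  then have "anc w s \<or> anc w t"
    using ancestor_trans[OF st(2) assms(4)] ancestor_trans[OF st(3) assms(4)] by blast
  then show ?thesis using assms(2,3) via(3,4) by simp
qed

lemma lower_endsD:
  assumes "w \<in> lower_ends E r l"
  shows "anc (apex E r l) w" "w \<noteq> apex E r l" "w \<in> Vl E l" "w \<in> V"
  using assms ancestor_apex Vl_subset_V by (auto simp: lower_ends_def)

lemma Pl_subset_E: "Pl E l \<subseteq> E"
proof -
  obtain s t where st: "l = {s, t}" "s \<in> V" "t \<in> V" using l by (auto simp: is_link_def)
  show ?thesis
    unfolding Pl_def st(1) doubleton_pairs using is_path_tpath st by (auto simp: is_path_def)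
qed

end

lemma tpath_to_descendant:
  "b \<in> V \<Longrightarrow> anc t b \<Longrightarrow> tpath E t b = drop (dep t) (rpath b)"
  using is_path_drop_rpath ancestorD(1) by (blast intro: tpath_eqI)

lemma edges_of_tpath_to_descendant:
  assumes "b \<in> V" "anc t b"
  shows "length (edges_of (tpath E t b)) = dep b - dep t"
    and "i < dep b - dep t \<Longrightarrow> edges_of (tpath E t b) ! i = parent_edge E r (rpath b ! Suc (dep t + i))"
proof -
  show "length (edges_of (tpath E t b)) = dep b - dep t"
    using tpath_to_descendant[OF assms] length_rpath[OF assms(1)] by simp
  assume "i < dep b - dep t"
  then have "Suc (dep t + i) \<le> dep b" by simp
  then show "edges_of (tpath E t b) ! i = parent_edge E r (rpath b ! Suc (dep t + i))"
    using nth_edges_of_drop_rpath(1)[OF assms(1)] tpath_to_descendant[OF assms] by simp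
qed

lemma lower_ends_vertical:
  assumes "b \<in> V" "anc t b"
  shows "lower_ends E r {t, b} = {w. anc t w \<and> w \<noteq> t \<and> anc w b}"
proof -
  have tV: "t \<in> V" using ancestorD(1) assms by blast
  have "lca E r t b = t"
    using ancestor_antisym[OF tV lca(1)[OF tV assms(1)] lca(3)[OF tV assms(1) ancestor_refl[OF tV] assms(2)]] .
  then have "lower_ends E r {t, b} = {v. anc t v \<and> v \<noteq> t \<and> (anc v t \<or> anc v b)}"
    using link_via_lca(4)[OF tV assms(1)] by simp
  moreover have "v = t" if "anc t v" "anc v t" for v using ancestor_antisym[OF tV that(2,1)] .
  ultimately show ?thesis by blast
qed

lemma uplink_ends:
  assumes "is_link V u" "is_uplink E r u"
  shows "u = {utop E r u, ubot E r u}" "utop E r u \<noteq> ubot E r u"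
    and "anc (utop E r u) (ubot E r u)" "ubot E r u \<in> V"
proof -
  obtain t b where tb: "u = {t, b}" "t \<noteq> b" "anc t b" using assms(2) by (auto simp: is_uplink_def)
  have bV: "b \<in> V" using assms(1) tb(1) by (auto simp: is_link_def doubleton_eq_iff)
  have "t' = t" if "u = {t', b'}" "t' \<noteq> b'" "anc t' b'" for t' b'
  proof (rule ccontr)
    assume "t' \<noteq> t"
    then have "t' = b" "b' = t" using that(1) tb(1) by (auto simp: doubleton_eq_iff)
    then show False using ancestor_antisym[OF bV tb(3)] that(3) tb(2) by simp
  qed
  then have "utop E r u = t"
    unfolding utop_def using tb by (intro the_equality) blast+
  moreover have "ubot E r u = b"
    unfolding ubot_def calculation using tb by (intro the_equality) (auto simp: doubleton_eq_iff)
  ultimately show "u = {utop E r u, ubot E r u}" "utop E r u \<noteq> ubot E r u"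
    and "anc (utop E r u) (ubot E r u)" "ubot E r u \<in> V" using tb bV by auto
qed

end

section \<open>Branchings with a strictly increasing rank\<close>

fun arc_walk :: "'c \<Rightarrow> ('b \<times> 'c \<times> 'c) list \<Rightarrow> 'c \<Rightarrow> bool" where
  "arc_walk y [] z \<longleftrightarrow> y = z"
| "arc_walk y (a # as) z \<longleftrightarrow> fst (snd a) = y \<and> arc_walk (snd (snd a)) as z"

definition walk_nodes :: "'c \<Rightarrow> ('b \<times> 'c \<times> 'c) list \<Rightarrow> 'c list" where
  "walk_nodes y as = y # map (\<lambda>a. snd (snd a)) as"

lemma arc_walk_snoc: "arc_walk y (as @ [a]) z \<longleftrightarrow> arc_walk y as (fst (snd a)) \<and> snd (snd a) = z"
  by (induction as arbitrary: y) auto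

lemma set_walk_nodes_snoc: "set (walk_nodes y (as @ [a])) = insert (snd (snd a)) (set (walk_nodes y as))"
  by (auto simp: walk_nodes_def)

lemma arc_walk_tail:
  "arc_walk y as z \<Longrightarrow> w \<in> set (walk_nodes y as) \<Longrightarrow> w \<noteq> z \<Longrightarrow> \<exists>a\<in>set as. fst (snd a) = w"
  by (induction as arbitrary: y) (auto simp: walk_nodes_def)

lemma arc_walk_arc_ends:
  "arc_walk y as z \<Longrightarrow> a \<in> set as \<Longrightarrow> fst (snd a) \<in> set (walk_nodes y as) \<and> snd (snd a) \<in> set (walk_nodes y as)"
  by (induction as arbitrary: y) (auto simp: walk_nodes_def)

lemma arc_walk_consecutive:
  "arc_walk y as z \<Longrightarrow> Suc i < length as \<Longrightarrow> snd (snd (as ! i)) = fst (snd (as ! Suc i))"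
proof (induction as arbitrary: y i)
  case (Cons a as)
  show ?case
  proof (cases i)
    case 0
    with Cons.prems show ?thesis by (cases as) auto
  next
    case (Suc j)
    with Cons show ?thesis by (metis arc_walk.simps(2) length_Cons nth_Cons_Suc Suc_less_SucD)
  qed
qed simp

lemma arc_walk_exists:
  assumes "(y, z) \<in> (arc_rel D)\<^sup>*" shows "\<exists>as. arc_walk y as z \<and> set as \<subseteq> D"
  using assms
proof (induction rule: converse_rtrancl_induct)
  case base
  show ?case by (rule exI[of _ "[]"]) simp
next
  case (step y y')
  obtain u where "(u, y, y') \<in> D" using step.hyps(1) by (auto simp: arc_rel_def)
  moreover obtain as where "arc_walk y' as z" "set as \<subseteq> D" using step.IH by blast
  ultimately show ?case by (intro exI[of _ "(u, y, y') # as"]) simp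
qed

lemma dipath_of_arc_walk:
  assumes walk: "arc_walk y as z" and "as \<noteq> []" "set as \<subseteq> D" "distinct (walk_nodes y as)"
    and "set (walk_nodes y as) \<subseteq> C"
  shows "dipath (comp_arcs D C) as"
  unfolding dipath_def
proof (intro conjI allI impI)
  show "set as \<subseteq> comp_arcs D C"
    using assms(3,5) arc_walk_arc_ends[OF walk] by (fastforce simp: comp_arcs_def)
  obtain a as' where as: "as = a # as'" using assms(2) by (cases as) auto
  then have "fst (snd (hd as)) # map (\<lambda>a. snd (snd a)) as = walk_nodes y as"
    using walk by (simp add: walk_nodes_def)
  then show "distinct (fst (snd (hd as)) # map (\<lambda>a. snd (snd a)) as)" using assms(4) by simp
qed (use assms arc_walk_consecutive in auto)

lemma card_tails_le_card_labels:
  assumes tails: "\<forall>l\<in>T. \<exists>a\<in>set as. fst (snd a) = l \<and> P a"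
    and same_label: "\<And>a b. a \<in> set as \<Longrightarrow> b \<in> set as \<Longrightarrow> P a \<Longrightarrow> P b \<Longrightarrow>
      fst (snd a) \<in> T \<Longrightarrow> fst (snd b) \<in> T \<Longrightarrow> fst a = fst b \<Longrightarrow> fst (snd a) = fst (snd b)"
  shows "card T \<le> card (fst ` set as)"
proof -
  have "\<forall>l\<in>T. \<exists>a. a \<in> set as \<and> fst (snd a) = l \<and> P a" using tails by blast
  from bchoice[OF this] obtain arc where arc: "\<forall>l\<in>T. arc l \<in> set as \<and> fst (snd (arc l)) = l \<and> P (arc l)"
    by blast
  have "inj_on (fst \<circ> arc) T"
  proof (rule inj_onI)
    fix l1 l2 assume "l1 \<in> T" "l2 \<in> T" "(fst \<circ> arc) l1 = (fst \<circ> arc) l2"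
    then show "l1 = l2" using same_label[of "arc l1" "arc l2"] arc by simp
  qed
  moreover have "(fst \<circ> arc) ` T \<subseteq> fst ` set as" using arc by auto
  ultimately show ?thesis by (simp add: card_inj_on_le)
qed

locale ranked_branching =
  fixes N :: "'c set" and D :: "('b \<times> 'c \<times> 'c) set" and rank :: "'c \<Rightarrow> nat"
  assumes arc_ends: "(x, y) \<in> arc_rel D \<Longrightarrow> x \<in> N \<and> y \<in> N"
    and in_arc_unique: "(x, y) \<in> arc_rel D \<Longrightarrow> (x', y) \<in> arc_rel D \<Longrightarrow> x = x'"
    and rank_arc: "(x, y) \<in> arc_rel D \<Longrightarrow> rank x < rank y"
begin

abbreviation R :: "('c \<times> 'c) set" where "R \<equiv> arc_rel D"

lemma rank_trancl: "(x, y) \<in> R\<^sup>+ \<Longrightarrow> rank x < rank y"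
  by (induction rule: trancl_induct) (auto dest: rank_arc)

lemma rank_rtrancl: "(x, y) \<in> R\<^sup>* \<Longrightarrow> rank x \<le> rank y"
  by (metis less_imp_le order_refl rank_trancl rtranclD)

lemma rtrancl_antisym: "(x, y) \<in> R\<^sup>* \<Longrightarrow> (y, x) \<in> R\<^sup>* \<Longrightarrow> x = y"
  by (metis leD rank_rtrancl rank_trancl rtranclD)

lemma rtrancl_in_N: "(x, y) \<in> R\<^sup>* \<Longrightarrow> x \<in> N \<Longrightarrow> y \<in> N"
  by (induction rule: rtrancl_induct) (auto dest: arc_ends)

lemma in_arc_rtrancl_unique: "(w, z) \<in> R\<^sup>* \<Longrightarrow> w \<noteq> z \<Longrightarrow> (p, z) \<in> R \<Longrightarrow> (w, p) \<in> R\<^sup>*"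
  by (metis in_arc_unique rtranclE)

lemma root_exists: "\<exists>\<rho>. (\<rho>, y) \<in> R\<^sup>* \<and> (\<forall>z. (z, \<rho>) \<notin> R)"
proof (induction "rank y" arbitrary: y rule: less_induct)
  case less
  show ?case
  proof (cases "\<exists>z. (z, y) \<in> R")
    case True
    then obtain z where z: "(z, y) \<in> R" by blast
    with less rank_arc obtain \<rho> where "(\<rho>, z) \<in> R\<^sup>*" "\<forall>z. (z, \<rho>) \<notin> R" by blast
    then show ?thesis using z by (meson rtrancl.rtrancl_into_rtrancl)
  qed blast
qed

lemma root_unique:
  assumes "(\<rho>, y) \<in> R\<^sup>*" "(\<rho>', y) \<in> R\<^sup>*" "\<forall>z. (z, \<rho>) \<notin> R" "\<forall>z. (z, \<rho>') \<notin> R"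
  shows "\<rho> = \<rho>'"
  using assms
proof (induction "rank y" arbitrary: y rule: less_induct)
  case less
  show ?case
  proof (cases "\<rho> = y \<or> \<rho>' = y")
    case True
    then show ?thesis using less.prems by (metis rtranclE)
  next
    case False
    then obtain p p' where "(\<rho>, p) \<in> R\<^sup>*" "(p, y) \<in> R" "(\<rho>', p') \<in> R\<^sup>*" "(p', y) \<in> R"
      using less.prems(1,2) by (metis rtranclE)
    moreover then have "p = p'" using in_arc_unique by blast
    ultimately show ?thesis using less.hyps[OF rank_arc] less.prems(3,4) by blast
  qed
qed

lemma predecessors_comparable:
  assumes "(a, z) \<in> R\<^sup>*" "(b, z) \<in> R\<^sup>*" shows "(a, b) \<in> R\<^sup>* \<or> (b, a) \<in> R\<^sup>*"
  using assms
proof (induction arbitrary: b rule: rtrancl_induct)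
  case (step y z)
  then show ?case by (metis in_arc_rtrancl_unique rtrancl.rtrancl_into_rtrancl)
qed blast

lemma comparable_or_fork:
  assumes "(y, l) \<in> R\<^sup>*" "(y, m) \<in> R\<^sup>*"
  shows "(l, m) \<in> R\<^sup>* \<or> (m, l) \<in> R\<^sup>* \<or>
    (\<exists>n l' m'. (n, l') \<in> R \<and> (n, m') \<in> R \<and> l' \<noteq> m' \<and> (l', l) \<in> R\<^sup>* \<and> (m', m) \<in> R\<^sup>*)"
  using assms
proof (induction rule: converse_rtrancl_induct)
  case (step y k)
  show ?case
  proof (cases "y = m")
    case True
    then show ?thesis using step.hyps by (meson converse_rtrancl_into_rtrancl)
  next
    case False
    then obtain k' where "(y, k') \<in> R" "(k', m) \<in> R\<^sup>*"
      using step.prems by (meson converse_rtranclE)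
    then show ?thesis using step by (cases "k' = k") blast+
  qed
qed blast

lemma weak_component_rooted:
  assumes "weak_component N D C"
  obtains \<rho> where "\<rho> \<in> N" "C = {y. (\<rho>, y) \<in> R\<^sup>*}"
proof -
  obtain x where x: "x \<in> N" and C: "C = {y \<in> N. (x, y) \<in> (R \<union> R\<inverse>)\<^sup>*}"
    using assms unfolding weak_component_def by blast
  obtain \<rho> where \<rho>: "(\<rho>, x) \<in> R\<^sup>*" "\<forall>z. (z, \<rho>) \<notin> R" using root_exists by blast
  have \<rho>N: "\<rho> \<in> N" using \<rho>(1) x by (metis arc_ends converse_rtranclE)
  have "(\<rho>, y) \<in> R\<^sup>*" if "(x, y) \<in> (R \<union> R\<inverse>)\<^sup>*" for y
    using that
  proof (induction rule: rtrancl_induct)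
    case (step y z)
    show ?case
    proof (cases "(y, z) \<in> R")
      case False
      then have zy: "(z, y) \<in> R" using step.hyps(2) by blast
      obtain \<rho>' where \<rho>': "(\<rho>', z) \<in> R\<^sup>*" "\<forall>w. (w, \<rho>') \<notin> R" using root_exists by blast
      have "\<rho>' = \<rho>" using root_unique[OF rtrancl_into_rtrancl[OF \<rho>'(1) zy] step.IH \<rho>'(2) \<rho>(2)] .
      then show ?thesis using \<rho>' by blast
    qed (use step.IH in auto)
  qed (use \<rho> in auto)
  moreover have "(x, y) \<in> (R \<union> R\<inverse>)\<^sup>*" if "(\<rho>, y) \<in> R\<^sup>*" for y
  proof -
    have "(x, \<rho>) \<in> (R \<union> R\<inverse>)\<^sup>*" "(\<rho>, y) \<in> (R \<union> R\<inverse>)\<^sup>*"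
      using \<rho>(1) that rtrancl_converse[of R] rtrancl_mono[of R "R \<union> R\<inverse>"]
        rtrancl_mono[of "R\<inverse>" "R \<union> R\<inverse>"] by auto
    then show ?thesis by (rule rtrancl_trans)
  qed
  ultimately have "C = {y. (\<rho>, y) \<in> R\<^sup>*}" using C \<rho>N rtrancl_in_N by blast
  with \<rho>N show ?thesis by (rule that)
qed

lemma arc_walk_reach:
  "arc_walk y as z \<Longrightarrow> set as \<subseteq> D \<Longrightarrow> w \<in> set (walk_nodes y as) \<Longrightarrow> (y, w) \<in> R\<^sup>* \<and> (w, z) \<in> R\<^sup>*"
proof (induction as arbitrary: y w)
  case (Cons a as)
  obtain u y' where a: "a = (u, y, y')" and walk: "arc_walk y' as z"
    using Cons.prems(1) by (cases a) auto
  have yy': "(y, y') \<in> R" using Cons.prems(2) a by (auto simp: arc_rel_def)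
  have asD: "set as \<subseteq> D" using Cons.prems(2) by simp
  have IH: "(y', w) \<in> R\<^sup>* \<and> (w, z) \<in> R\<^sup>*" if "w \<in> set (walk_nodes y' as)" for w
    using Cons.IH[OF walk asD that] .
  then have "(y', z) \<in> R\<^sup>*" by (simp add: walk_nodes_def)
  then show ?case
    using Cons.prems(3) a IH converse_rtrancl_into_rtrancl[OF yy'] by (auto simp: walk_nodes_def)
qed (simp add: walk_nodes_def)

text \<open>This is where the uniqueness of in-arcs is used.\<close>

lemma arc_walk_through:
  "arc_walk y as z \<Longrightarrow> set as \<subseteq> D \<Longrightarrow> (y, w) \<in> R\<^sup>* \<Longrightarrow> (w, z) \<in> R\<^sup>* \<Longrightarrow> w \<in> set (walk_nodes y as)"
proof (induction as arbitrary: z rule: rev_induct)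
  case Nil
  then show ?case using rtrancl_antisym by (simp add: walk_nodes_def)
next
  case (snoc a as)
  obtain u p where a: "a = (u, p, z)" "arc_walk y as p"
    using snoc.prems(1) by (cases a) (auto simp: arc_walk_snoc)
  then have "(p, z) \<in> R" using snoc.prems(2) by (auto simp: arc_rel_def)
  then show ?case
    using snoc a in_arc_rtrancl_unique[OF snoc.prems(4)] by (cases "w = z") (auto simp: set_walk_nodes_snoc)
qed

lemma arc_walk_distinct: "arc_walk y as z \<Longrightarrow> set as \<subseteq> D \<Longrightarrow> distinct (walk_nodes y as)"
proof (induction as arbitrary: y)
  case (Cons a as)
  obtain u y' where a: "a = (u, y, y')" and walk: "arc_walk y' as z"
    using Cons.prems(1) by (cases a) auto
  have yy': "(y, y') \<in> R" using Cons.prems(2) a by (auto simp: arc_rel_def)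
  have "y \<notin> set (walk_nodes y' as)"
  proof
    assume "y \<in> set (walk_nodes y' as)"
    then have "(y', y) \<in> R\<^sup>*" using arc_walk_reach[OF walk] Cons.prems(2) by simp
    then show False using rank_arc[OF yy'] rank_rtrancl by (meson leD)
  qed
  then show ?case using Cons.IH walk Cons.prems(2) a by (simp add: walk_nodes_def)
qed (simp add: walk_nodes_def)

lemma chain_extremes:
  assumes "finite S" "S \<noteq> {}" "\<And>l m. l \<in> S \<Longrightarrow> m \<in> S \<Longrightarrow> (l, m) \<in> R\<^sup>* \<or> (m, l) \<in> R\<^sup>*"
  shows "\<exists>l\<^sub>0\<in>S. \<exists>\<mu>\<in>S. \<forall>l\<in>S. (l\<^sub>0, l) \<in> R\<^sup>* \<and> (l, \<mu>) \<in> R\<^sup>*"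
proof -
  have below: "(l, m) \<in> R\<^sup>*" if "l \<in> S" "m \<in> S" "rank l \<le> rank m" for l m
  proof (rule ccontr)
    assume "(l, m) \<notin> R\<^sup>*"
    then have "(m, l) \<in> R\<^sup>+" using assms(3)[OF that(1,2)] by (auto simp: rtrancl_eq_or_trancl)
    then show False using rank_trancl that(3) by (meson leD)
  qed
  have "Min (rank ` S) \<in> rank ` S" "Max (rank ` S) \<in> rank ` S" using assms(1,2) by auto
  then obtain l\<^sub>0 \<mu> where "l\<^sub>0 \<in> S" "rank l\<^sub>0 = Min (rank ` S)" "\<mu> \<in> S" "rank \<mu> = Max (rank ` S)"
    by (metis imageE)
  moreover then have "(l\<^sub>0, l) \<in> R\<^sup>* \<and> (l, \<mu>) \<in> R\<^sup>*" if "l \<in> S" for l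
    using below that assms(1) by simp
  ultimately show ?thesis by blast
qed

lemma chain_on_dipath:
  assumes C: "C = {y. (\<rho>, y) \<in> R\<^sup>*}" and S: "S \<subseteq> C" "finite S"
    and chain: "\<And>l m. l \<in> S \<Longrightarrow> m \<in> S \<Longrightarrow> (l, m) \<in> R\<^sup>* \<or> (m, l) \<in> R\<^sup>*"
    and two: "2 \<le> card S"
  shows "\<exists>\<mu>\<in>S. \<exists>as. dipath (comp_arcs D C) as \<and>
    (\<forall>l\<in>S - {\<mu>}. \<exists>a\<in>set as. fst (snd a) = l \<and> (snd (snd a), \<mu>) \<in> R\<^sup>*)"
proof -
  have "S \<noteq> {}" using two by auto
  obtain l\<^sub>0 \<mu> where ends: "l\<^sub>0 \<in> S" "\<mu> \<in> S" and between: "\<And>l. l \<in> S \<Longrightarrow> (l\<^sub>0, l) \<in> R\<^sup>* \<and> (l, \<mu>) \<in> R\<^sup>*"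
    using chain_extremes[OF S(2) \<open>S \<noteq> {}\<close> chain] by blast
  obtain as where walk: "arc_walk l\<^sub>0 as \<mu>" and asD: "set as \<subseteq> D"
    using arc_walk_exists[OF conjunct1[OF between[OF ends(2)]]] by blast
  have "as \<noteq> []"
  proof
    assume "as = []"
    then have "l\<^sub>0 = \<mu>" using walk by simp
    have "l = \<mu>" if "l \<in> S" for l
      using rtrancl_antisym between[OF that] \<open>l\<^sub>0 = \<mu>\<close> by simp
    then have "S \<subseteq> {\<mu>}" by blast
    then show False using S(2) two card_mono[of "{\<mu>}" S] by simp
  qed
  moreover have "(\<rho>, w) \<in> R\<^sup>*" if "w \<in> set (walk_nodes l\<^sub>0 as)" for w
    using rtrancl_trans[of \<rho> l\<^sub>0 R w] conjunct1[OF arc_walk_reach[OF walk asD that]] ends(1) S(1) C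
    by blast
  ultimately have "dipath (comp_arcs D C) as"
    using dipath_of_arc_walk[OF walk _ asD arc_walk_distinct[OF walk asD]] C by (simp add: subset_iff)
  moreover have "\<exists>a\<in>set as. fst (snd a) = l \<and> (snd (snd a), \<mu>) \<in> R\<^sup>*" if "l \<in> S - {\<mu>}" for l
  proof -
    have on_walk: "l \<in> set (walk_nodes l\<^sub>0 as)"
      using arc_walk_through[OF walk asD] between that by simp
    have "l \<noteq> \<mu>" using that by blast
    then obtain a where a: "a \<in> set as" "fst (snd a) = l"
      using arc_walk_tail[OF walk on_walk] by blast
    then have "(snd (snd a), \<mu>) \<in> R\<^sup>*"
      using arc_walk_arc_ends[OF walk a(1)] arc_walk_reach[OF walk asD] by blast
    with a show ?thesis by blast
  qed
  ultimately show ?thesis using ends(2) by blast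
qed

end

section \<open>The dependency graph of disjoint up-links\<close>

text \<open>The lower endpoints of the edges of \<open>P\<^sub>u\<^sub>,\<^sub>l\<close>.\<close>

definition own_ends :: "'a set set \<Rightarrow> 'a \<Rightarrow> ('a set \<Rightarrow> 'a set set) \<Rightarrow> 'a set \<Rightarrow> 'a set \<Rightarrow> 'a set" where
  "own_ends E r Fs u l = lower_ends E r u - \<Union>(lower_ends E r ` (Fs u - {l}))"

locale dependency_graph = rooted_tree V E r for V :: "'a set" and E r +
  fixes L F U :: "'a set set" and Fs :: "'a set \<Rightarrow> 'a set set"
  assumes links: "\<forall>l\<in>L. is_link V l"
    and sol: "wtap_solution E L F"
    and Fsel: "valid_Fsel E r F U Fs"
    and Uup: "U \<subseteq> Lup E r L"
    and disj: "\<forall>u1\<in>U. \<forall>u2\<in>U. u1 \<noteq> u2 \<longrightarrow> Pl E u1 \<inter> Pl E u2 = {}"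
begin

abbreviation ap :: "'a set \<Rightarrow> 'a" where "ap l \<equiv> apex E r l"
abbreviation Q :: "'a set \<Rightarrow> 'a set" where "Q l \<equiv> lower_ends E r l"
abbreviation own :: "'a set \<Rightarrow> 'a set \<Rightarrow> 'a set" where "own u l \<equiv> own_ends E r Fs u l"
abbreviation tu :: "'a set \<Rightarrow> 'a" where "tu u \<equiv> utop E r u"
abbreviation bu :: "'a set \<Rightarrow> 'a" where "bu u \<equiv> ubot E r u"

lemma F_link: "l \<in> F \<Longrightarrow> is_link V l"
  using sol links unfolding wtap_solution_def by blast

lemma U_link: "u \<in> U \<Longrightarrow> is_link V u"
  and U_uplink: "u \<in> U \<Longrightarrow> is_uplink E r u"
  using Uup links unfolding Lup_def by blast+

lemma Fs_subset_Bset: "u \<in> U \<Longrightarrow> Fs u \<subseteq> Bset E r F (vu E r F u)"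
  and Fs_covers: "u \<in> U \<Longrightarrow> covers E (Fs u) (Pl E u)"
  and Fs_minimal: "u \<in> U \<Longrightarrow> X \<subset> Fs u \<Longrightarrow> \<not> covers E X (Pl E u)"
  using Fsel unfolding valid_Fsel_def by blast+

lemma Fs_subset_F: "u \<in> U \<Longrightarrow> Fs u \<subseteq> F"
  using Fs_subset_Bset unfolding Bset_def by blast

lemma Fs_link: "u \<in> U \<Longrightarrow> l \<in> Fs u \<Longrightarrow> is_link V l"
  using Fs_subset_F F_link by blast

lemma U_ends:
  assumes "u \<in> U"
  shows "anc (tu u) (bu u)" "bu u \<in> V" "tu u \<in> V"
proof -
  note ends = uplink_ends[OF U_link[OF assms] U_uplink[OF assms]]
  show "anc (tu u) (bu u)" "bu u \<in> V" using ends(3,4) .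
  then show "tu u \<in> V" by (rule ancestorD(1)[rotated])
qed

lemma lower_ends_uplink:
  assumes "u \<in> U"
  shows "w \<in> Q u \<longleftrightarrow> anc (tu u) w \<and> w \<noteq> tu u \<and> anc w (bu u)"
proof -
  from uplink_ends(1)[OF U_link[OF assms] U_uplink[OF assms]]
  have "Q u = Q {tu u, bu u}" by (rule arg_cong)
  then show ?thesis using lower_ends_vertical[OF U_ends(2,1)[OF assms]] by simp
qed

text \<open>Injectivity of \<open>parent_edge\<close> reduces covering of edges to covering of lower endpoints.\<close>

lemma covers_iff_lower_ends:
  assumes "is_link V u" "\<And>l. l \<in> X \<Longrightarrow> is_link V l"
  shows "covers E X (Pl E u) \<longleftrightarrow> Q u \<subseteq> \<Union>(Q ` X)"
proof -
  have "Q u \<union> \<Union>(Q ` X) \<subseteq> V - {r}"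
    using lower_ends_subset[OF assms(1)] lower_ends_subset[OF assms(2)] by blast
  then have inj: "inj_on (parent_edge E r) (Q u \<union> \<Union>(Q ` X))"
    by (rule inj_on_subset[OF inj_on_parent_edge])
  have "(\<Union>l\<in>X. Pl E l) = (\<Union>l\<in>X. parent_edge E r ` Q l)"
    by (rule SUP_cong) (simp_all add: Pl_eq_parent_edges assms(2))
  then have "(\<Union>l\<in>X. Pl E l) = parent_edge E r ` \<Union>(Q ` X)" by (simp add: image_UN)
  then have "covers E X (Pl E u) \<longleftrightarrow> parent_edge E r ` Q u \<subseteq> parent_edge E r ` \<Union>(Q ` X)"
    unfolding covers_def Pl_eq_parent_edges[OF assms(1)] by simp
  also have "\<dots> \<longleftrightarrow> Q u \<subseteq> \<Union>(Q ` X)"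
  proof
    assume image: "parent_edge E r ` Q u \<subseteq> parent_edge E r ` \<Union>(Q ` X)"
    show "Q u \<subseteq> \<Union>(Q ` X)"
    proof
      fix w assume "w \<in> Q u"
      then show "w \<in> \<Union>(Q ` X)"
        using image inj_on_image_mem_iff[OF inj, of w "\<Union>(Q ` X)"] by blast
    qed
  qed (rule image_mono)
  finally show ?thesis .
qed

lemma Pul_eq_parent_edges:
  assumes u: "u \<in> U"
  shows "Pul E Fs u l = parent_edge E r ` own u l"
proof -
  have "Q u \<union> \<Union>(Q ` (Fs u - {l})) \<subseteq> V - {r}"
    using lower_ends_subset[OF U_link[OF u]] lower_ends_subset[OF Fs_link[OF u]] by blast
  then have inj: "inj_on (parent_edge E r) (Q u \<union> \<Union>(Q ` (Fs u - {l})))"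
    by (rule inj_on_subset[OF inj_on_parent_edge])
  have "(\<Union>l'\<in>Fs u - {l}. Pl E l') = (\<Union>l'\<in>Fs u - {l}. parent_edge E r ` Q l')"
    by (rule SUP_cong) (simp_all add: Pl_eq_parent_edges Fs_link[OF u])
  then have "(\<Union>l'\<in>Fs u - {l}. Pl E l') = parent_edge E r ` \<Union>(Q ` (Fs u - {l}))"
    by (simp add: image_UN)
  moreover have "parent_edge E r ` (Q u - \<Union>(Q ` (Fs u - {l}))) =
      parent_edge E r ` Q u - parent_edge E r ` \<Union>(Q ` (Fs u - {l}))"
    by (rule inj_on_image_set_diff[OF inj]) blast+
  ultimately show ?thesis
    unfolding Pul_def own_ends_def Pl_eq_parent_edges[OF U_link[OF u]] by simp
qed

lemma Fs_covers_lower_ends: "u \<in> U \<Longrightarrow> Q u \<subseteq> \<Union>(Q ` Fs u)"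
  using Fs_covers covers_iff_lower_ends[OF U_link Fs_link] by simp

lemma own_ends_nonempty:
  assumes "u \<in> U" "l \<in> Fs u"
  shows "own u l \<noteq> {}"
proof
  assume "own u l = {}"
  then have "Q u \<subseteq> \<Union>(Q ` (Fs u - {l}))" unfolding own_ends_def by blast
  moreover have "is_link V l'" if "l' \<in> Fs u - {l}" for l' using Fs_link[OF assms(1)] that by blast
  ultimately have "covers E (Fs u - {l}) (Pl E u)"
    using covers_iff_lower_ends[OF U_link[OF assms(1)]] by blast
  then show False using Fs_minimal[OF assms(1)] assms(2) by blast
qed

lemma own_ends_subset: "w \<in> own u l \<Longrightarrow> w \<in> Q u"
  unfolding own_ends_def by blast

lemma own_ends_other: "w \<in> own u l \<Longrightarrow> l' \<in> Fs u \<Longrightarrow> l' \<noteq> l \<Longrightarrow> w \<notin> Q l'"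
  unfolding own_ends_def by blast

lemma own_ends_lower_ends:
  assumes "u \<in> U" "w \<in> own u l"
  shows "w \<in> Q l"
proof -
  obtain l' where "l' \<in> Fs u" "w \<in> Q l'"
    using Fs_covers_lower_ends[OF assms(1)] own_ends_subset[OF assms(2)] by blast
  then show ?thesis using own_ends_other[OF assms(2)] by blast
qed

lemma own_ends_between:
  "u \<in> U \<Longrightarrow> w \<in> own u l \<Longrightarrow> anc (tu u) w \<and> w \<noteq> tu u \<and> anc w (bu u)"
  using lower_ends_uplink own_ends_subset by blast

lemma lower_ends_disjoint:
  assumes "u \<in> U" "u' \<in> U" "u \<noteq> u'"
  shows "Q u \<inter> Q u' = {}"
proof -
  have "Pl E u \<inter> Pl E u' = {}" using disj assms by blast
  then show ?thesis
    unfolding Pl_eq_parent_edges[OF U_link[OF assms(1)]] Pl_eq_parent_edges[OF U_link[OF assms(2)]]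
    by blast
qed

lemma lower_ends_convex:
  assumes "is_link V l" "p \<in> Q l" "q \<in> Vl E l" "anc p w" "anc w q"
  shows "w \<in> Q l"
proof -
  note p = lower_endsD[OF assms(1,2)]
  have wV: "w \<in> V" using ancestorD(1) Vl_subset_V[OF assms(1)] assms(3,5) by blast
  have "w \<noteq> ap l" using ancestor_antisym[OF p(4) p(1)] p(2) assms(4) by blast
  then show ?thesis
    using lower_endsI[OF assms(1,3) _ _ assms(5)] ancestor_trans[OF wV p(1) assms(4)] by blast
qed

text \<open>The \<open>i\<close>-th edge of the \<open>t\<close>-\<open>b\<close> path is the parent edge of its vertex of depth
  \<open>dep t + i + 1\<close>.\<close>

lemma prec_u_iff_depth:
  assumes u: "u \<in> U"
  shows "prec_u E r Fs u l1 l2 \<longleftrightarrow> (\<forall>v\<in>own u l1. \<forall>w\<in>own u l2. dep v < dep w)"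
proof -
  define t b where "t = tu u" and "b = bu u"
  have b: "b \<in> V" and tb: "anc t b" using U_ends[OF u] by (simp_all add: t_def b_def)
  define es where "es = edges_of (tpath E t b)"
  define w where "w i = rpath b ! Suc (dep t + i)" for i
  have len: "length es = dep b - dep t" using edges_of_tpath_to_descendant(1)[OF b tb] by (simp add: es_def)
  have es: "es ! i = parent_edge E r (w i)" "w i \<in> V - {r}" "dep (w i) = Suc (dep t + i)"
    if "i < length es" for i
  proof -
    have le: "Suc (dep t + i) \<le> dep b" using that len by simp
    show "es ! i = parent_edge E r (w i)"
      using edges_of_tpath_to_descendant(2)[OF b tb] that len by (simp add: es_def w_def)
    show "dep (w i) = Suc (dep t + i)" using ancestor_nth_rpath(2)[OF b le] by (simp add: w_def)
    then show "w i \<in> V - {r}" using ancestor_nth_rpath(4)[OF b le] depth_root by (auto simp: w_def)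
  qed
  have index: "dep v - Suc (dep t) < length es \<and> w (dep v - Suc (dep t)) = v" if "v \<in> own u l" for v l
  proof -
    have v: "anc t v" "v \<noteq> t" "anc v b" using own_ends_between[OF u that] by (simp_all add: t_def b_def)
    have "dep t < dep v" using depth_strict_mono[OF ancestorD(1)[OF b v(3)] v(1)] v(2) by simp
    then show ?thesis using ancestorD(2,3)[OF b v(3)] len by (simp add: w_def)
  qed
  have mem: "es ! i \<in> Pul E Fs u l \<longleftrightarrow> w i \<in> own u l" if "i < length es" for i l
  proof -
    have "own u l \<subseteq> V - {r}" using own_ends_subset lower_ends_subset[OF U_link[OF u]] by blast
    then show ?thesis
      using es(1,2)[OF that] Pul_eq_parent_edges[OF u] inj_on_image_mem_iff[OF inj_on_parent_edge] by simp
  qed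
  have "prec_u E r Fs u l1 l2 \<longleftrightarrow>
      (\<forall>i j. i < length es \<and> j < length es \<and> w i \<in> own u l1 \<and> w j \<in> own u l2 \<longrightarrow> i < j)"
    unfolding prec_u_def Let_def t_def[symmetric] b_def[symmetric] es_def[symmetric] using mem by blast
  also have "\<dots> \<longleftrightarrow> (\<forall>v\<in>own u l1. \<forall>w\<in>own u l2. dep v < dep w)"
  proof
    assume order: "\<forall>i j. i < length es \<and> j < length es \<and> w i \<in> own u l1 \<and> w j \<in> own u l2 \<longrightarrow> i < j"
    show "\<forall>v\<in>own u l1. \<forall>w\<in>own u l2. dep v < dep w"
    proof (intro ballI)
      fix v v' assume v: "v \<in> own u l1" and v': "v' \<in> own u l2"
      then have "dep v - Suc (dep t) < dep v' - Suc (dep t)"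
        using order index[OF v] index[OF v'] by metis
      then show "dep v < dep v'" by simp
    qed
  next
    assume order: "\<forall>v\<in>own u l1. \<forall>w\<in>own u l2. dep v < dep w"
    show "\<forall>i j. i < length es \<and> j < length es \<and> w i \<in> own u l1 \<and> w j \<in> own u l2 \<longrightarrow> i < j"
    proof (intro allI impI)
      fix i j assume "i < length es \<and> j < length es \<and> w i \<in> own u l1 \<and> w j \<in> own u l2"
      then show "i < j" using order es(3)[of i] es(3)[of j] by fastforce
    qed
  qed
  finally show ?thesis .
qed

lemma own_ends_not_interleaved:
  assumes u: "u \<in> U" and l: "l1 \<in> Fs u" "l2 \<in> Fs u" "l1 \<noteq> l2"
    and p: "p \<in> own u l1" "p' \<in> own u l1" and q: "q \<in> own u l2" "q' \<in> own u l2"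
    and "dep p < dep q" "dep q' < dep p'"
  shows False
proof -
  have b: "bu u \<in> V" using U_ends[OF u] by blast
  have below: "anc x (bu u)" if "x \<in> own u l" for x l using own_ends_between[OF u that] by blast
  note link1 = Fs_link[OF u l(1)] and link2 = Fs_link[OF u l(2)]
  have "q \<notin> Q l1" "p' \<notin> Q l2" using own_ends_other p q l by blast+
  moreover have pq: "anc p q" using ancestors_depth_less[OF b below below] p q assms by blast
  ultimately have "p' \<noteq> q" "\<not> anc q p'"
    using lower_ends_convex[OF link1 own_ends_lower_ends[OF u p(1)] lower_endsD(3)[OF link1]]
      own_ends_lower_ends[OF u p(2)] own_ends_lower_ends[OF u q(1)] by blast+
  then have "anc p' q"
    using ancestors_linear[OF b below below] p q by blast
  moreover have "anc q' p'" using ancestors_depth_less[OF b below below] p q assms by blast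
  ultimately show False
    using lower_ends_convex[OF link2 own_ends_lower_ends[OF u q(2)] lower_endsD(3)[OF link2]]
      own_ends_lower_ends[OF u q(1)] \<open>p' \<notin> Q l2\<close> by blast
qed

lemma prec_u_total:
  assumes u: "u \<in> U" and l: "l1 \<in> Fs u" "l2 \<in> Fs u" "l1 \<noteq> l2"
  shows "prec_u E r Fs u l1 l2 \<or> prec_u E r Fs u l2 l1"
proof -
  have b: "bu u \<in> V" using U_ends[OF u] by blast
  have neq: "dep v < dep w \<or> dep w < dep v" if "v \<in> own u la" "w \<in> own u lb" "la \<noteq> lb" "lb \<in> Fs u" for v w la lb
    using that ancestors_depth_neq[OF b] own_ends_between[OF u] own_ends_other own_ends_lower_ends[OF u]
    by metis
  have prec: "prec_u E r Fs u la lb"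
    if "la \<in> Fs u" "lb \<in> Fs u" "la \<noteq> lb" "p \<in> own u la" "q \<in> own u lb" "dep p < dep q" for la lb p q
    unfolding prec_u_iff_depth[OF u]
    using neq own_ends_not_interleaved[OF u that(1-4) _ that(5) _ that(6)] that by blast
  obtain p q where "p \<in> own u l1" "q \<in> own u l2" using own_ends_nonempty[OF u] l by blast
  then show ?thesis using neq prec l by metis
qed

lemma Au_iff: "(l1, l2) \<in> Au E r Fs u \<longleftrightarrow> l1 \<in> Fs u \<and> l2 \<in> Fs u \<and> l1 \<noteq> l2 \<and> prec_u E r Fs u l1 l2 \<and>
      \<not> (\<exists>l3\<in>Fs u. l3 \<noteq> l1 \<and> l3 \<noteq> l2 \<and> prec_u E r Fs u l1 l3 \<and> prec_u E r Fs u l3 l2)"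
  unfolding Au_def by simp

lemma Au_head_unique: "u \<in> U \<Longrightarrow> (n, l1) \<in> Au E r Fs u \<Longrightarrow> (n, l2) \<in> Au E r Fs u \<Longrightarrow> l1 = l2"
  unfolding Au_iff by (metis prec_u_total)

lemma Au_tail_unique: "u \<in> U \<Longrightarrow> (n1, l) \<in> Au E r Fs u \<Longrightarrow> (n2, l) \<in> Au E r Fs u \<Longrightarrow> n1 = n2"
  unfolding Au_iff by (metis prec_u_total)

lemma Au_tail_own_above_head_own:
  assumes u: "u \<in> U" and a: "(n, l) \<in> Au E r Fs u" and v: "v \<in> own u n" and w: "w \<in> own u l"
  shows "anc v w"
proof -
  have "dep v < dep w" using a v w unfolding Au_iff prec_u_iff_depth[OF u] by blast
  moreover have "anc v (bu u)" "anc w (bu u)"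
    using own_ends_between[OF u v] own_ends_between[OF u w] by simp_all
  ultimately show ?thesis using ancestors_depth_less[OF U_ends(2)[OF u]] by blast
qed

lemma Au_head_apex_in_lower_ends:
  assumes u: "u \<in> U" and a: "(n, l) \<in> Au E r Fs u"
  shows "ap l \<in> Q u"
proof -
  have n: "n \<in> Fs u" and l: "l \<in> Fs u" "n \<noteq> l" using a unfolding Au_iff by blast+
  note link = Fs_link[OF u l(1)]
  obtain v w where v: "v \<in> own u n" and w: "w \<in> own u l" using own_ends_nonempty[OF u] n l by blast
  have vw: "anc v w" using Au_tail_own_above_head_own[OF u a v w] .
  have vt: "anc (tu u) v" "v \<noteq> tu u" "anc v (bu u)" using own_ends_between[OF u v] by simp_all
  have wt: "anc (tu u) w" "anc w (bu u)" using own_ends_between[OF u w] by simp_all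
  note wl = lower_endsD[OF link own_ends_lower_ends[OF u w]]
  have vV: "v \<in> V" using ancestorD(1)[OF U_ends(2)[OF u] vt(3)] .
  have not_above: "\<not> anc (ap l) (tu u)"
  proof
    assume at: "anc (ap l) (tu u)"
    have "anc (ap l) v" using ancestor_trans[OF vV at vt(1)] .
    moreover have "v \<noteq> ap l"
    proof
      assume "v = ap l"
      then have "anc v (tu u)" using at by simp
      then show False using ancestor_antisym[OF vV vt(1)] vt(2) by simp
    qed
    ultimately have "v \<in> Q l" using lower_endsI[OF link wl(3) _ _ vw] by blast
    then show False using own_ends_other[OF v l(1)] l(2) by blast
  qed
  then have "anc (tu u) (ap l)" using ancestors_linear[OF wl(4) wl(1) wt(1)] by blast
  moreover have "ap l \<noteq> tu u"
  proof
    assume "ap l = tu u"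
    then show False using not_above ancestor_refl[OF U_ends(3)[OF u]] by simp
  qed
  moreover have "anc (ap l) (bu u)" using ancestor_trans[OF U_ends(2)[OF u] wl(1) wt(2)] .
  ultimately show ?thesis using lower_ends_uplink[OF u] by blast
qed

lemma Au_tail_own_above_head_apex:
  assumes u: "u \<in> U" and a: "(n, l) \<in> Au E r Fs u" and v: "v \<in> own u n"
  shows "anc v (ap l)"
proof (rule ccontr)
  assume not_above: "\<not> anc v (ap l)"
  have l: "l \<in> Fs u" "n \<noteq> l" using a unfolding Au_iff by blast+
  note link = Fs_link[OF u l(1)]
  have b: "bu u \<in> V" using U_ends[OF u] by blast
  have "anc (ap l) (bu u)" using lower_ends_uplink[OF u] Au_head_apex_in_lower_ends[OF u a] by blast
  then have "anc (ap l) v" "v \<noteq> ap l"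
    using ancestors_linear[OF b] own_ends_between[OF u v] not_above ancestor_refl[OF apex_in_V[OF link]]
    by blast+
  moreover obtain w where w: "w \<in> own u l" using own_ends_nonempty[OF u l(1)] by blast
  ultimately have "v \<in> Q l"
    using lower_endsI[OF link _ _ _ Au_tail_own_above_head_own[OF u a v w]]
      lower_endsD(3)[OF link own_ends_lower_ends[OF u w]] by blast
  then show False using own_ends_other[OF v l(1)] l(2) by blast
qed

text \<open>Otherwise the link of \<open>F\<^sub>u\<close> covering \<open>ap l\<close> would lie strictly between \<open>n\<close> and \<open>l\<close>
  in \<open>\<prec>\<^sub>u\<close>.\<close>

lemma Au_head_apex_in_tail:
  assumes u: "u \<in> U" and a: "(n, l) \<in> Au E r Fs u"
  shows "ap l \<in> Q n"
proof (rule ccontr)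
  assume not_in: "ap l \<notin> Q n"
  have n: "n \<in> Fs u" and l: "l \<in> Fs u" "n \<noteq> l"
    and consecutive: "\<not> (\<exists>m\<in>Fs u. m \<noteq> n \<and> m \<noteq> l \<and> prec_u E r Fs u n m \<and> prec_u E r Fs u m l)"
    using a unfolding Au_iff by blast+
  obtain m where m: "m \<in> Fs u" "ap l \<in> Q m"
    using Fs_covers_lower_ends[OF u] Au_head_apex_in_lower_ends[OF u a] by blast
  note linkm = Fs_link[OF u m(1)]
  have ml: "m \<noteq> l" using m(2) lower_endsD(2)[OF Fs_link[OF u l(1)]] by blast
  have mn: "m \<noteq> n" using m(2) not_in by blast
  obtain v where v: "v \<in> own u n" using own_ends_nonempty[OF u n] by blast
  obtain w where w: "w \<in> own u l" using own_ends_nonempty[OF u l(1)] by blast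
  obtain z where z: "z \<in> own u m" using own_ends_nonempty[OF u m(1)] by blast
  have b: "bu u \<in> V" using U_ends[OF u] by blast
  have below: "anc x (bu u)" if "x \<in> own u k" for x k using own_ends_between[OF u that] by blast
  have "\<not> prec_u E r Fs u m n"
  proof
    assume "prec_u E r Fs u m n"
    then have "anc z v" using ancestors_depth_less[OF b below below] z v
      unfolding prec_u_iff_depth[OF u] by blast
    then have "v \<in> Q m"
      using lower_ends_convex[OF linkm own_ends_lower_ends[OF u z] lower_endsD(3)[OF linkm m(2)]]
        Au_tail_own_above_head_apex[OF u a v] by blast
    then show False using own_ends_other[OF v m(1) mn] by blast
  qed
  moreover have "\<not> prec_u E r Fs u l m"
  proof
    assume "prec_u E r Fs u l m"
    then have "anc w z" using ancestors_depth_less[OF b below below] z w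
      unfolding prec_u_iff_depth[OF u] by blast
    then have "w \<in> Q m"
      using lower_ends_convex[OF linkm m(2) lower_endsD(3)[OF linkm own_ends_lower_ends[OF u z]]]
        lower_endsD(1)[OF Fs_link[OF u l(1)] own_ends_lower_ends[OF u w]] by blast
    then show False using own_ends_other[OF w m(1) ml] by blast
  qed
  ultimately show False
    using consecutive prec_u_total[OF u] m(1) n l(1) mn ml by metis
qed

lemma Au_apex_below:
  assumes "u \<in> U" "(n, l) \<in> Au E r Fs u"
  shows "anc (ap n) (ap l)" "dep (ap n) < dep (ap l)"
proof -
  have links: "is_link V n" "is_link V l" using assms Fs_link unfolding Au_iff by blast+
  show "anc (ap n) (ap l)" using lower_endsD(1)[OF links(1) Au_head_apex_in_tail[OF assms]] .
  then show "dep (ap n) < dep (ap l)"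
    using depth_strict_mono[OF apex_in_V[OF links(2)]] lower_endsD(2)[OF links(1) Au_head_apex_in_tail[OF assms]]
    by metis
qed

end

sublocale dependency_graph \<subseteq> ranked_branching F "dep_arcs E r Fs U" "\<lambda>l. dep (ap l)"
proof
  fix x y x' assume xy: "(x, y) \<in> arc_rel (dep_arcs E r Fs U)"
  then obtain u where u: "u \<in> U" "(x, y) \<in> Au E r Fs u" by (auto simp: arc_rel_def dep_arcs_def)
  then show "x \<in> F \<and> y \<in> F" using Fs_subset_F unfolding Au_iff by blast
  show "dep (ap x) < dep (ap y)" using Au_apex_below(2)[OF u] .
  assume "(x', y) \<in> arc_rel (dep_arcs E r Fs U)"
  then obtain u' where u': "u' \<in> U" "(x', y) \<in> Au E r Fs u'" by (auto simp: arc_rel_def dep_arcs_def)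
  have "u = u'"
    using lower_ends_disjoint[OF u(1) u'(1)] Au_head_apex_in_lower_ends u u' by blast
  then show "x = x'" using Au_tail_unique u u' by blast
qed

context dependency_graph
begin

lemma arc_rel_iff: "(x, y) \<in> R \<longleftrightarrow> (\<exists>u\<in>U. (x, y) \<in> Au E r Fs u)"
  unfolding arc_rel_def dep_arcs_def by blast

lemma rtrancl_apex: "(x, y) \<in> R\<^sup>* \<Longrightarrow> y \<in> F \<Longrightarrow> anc (ap x) (ap y)"
proof (induction rule: converse_rtrancl_induct)
  case base
  then show ?case using ancestor_refl apex_in_V F_link by blast
next
  case (step x x')
  then show ?case
    using arc_rel_iff Au_apex_below(1) ancestor_trans apex_in_V F_link by meson
qed

lemma rtrancl_in_F: "(x, y) \<in> R\<^sup>* \<Longrightarrow> y \<in> F \<Longrightarrow> x \<in> F"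
  by (metis arc_ends converse_rtranclE)

lemma vu:
  assumes u: "u \<in> U"
  shows "anc (vu E r F u) (tu u)"
    and "\<And>x. anc x (tu u) \<Longrightarrow> covers E (Bset E r F x) (Pl E u) \<Longrightarrow> dep x \<le> dep (vu E r F u)"
proof -
  have "tu u \<in> V" using uplink_ends[OF U_link[OF u] U_uplink[OF u]] ancestorD(1) by blast
  moreover have "Bset E r F r = F"
    unfolding Bset_def using root_ancestor apex_in_V F_link by blast
  then have "covers E (Bset E r F r) (Pl E u)"
    using Pl_subset_E[OF U_link[OF u]] sol unfolding covers_def wtap_solution_def by simp
  ultimately have "\<exists>!v. (anc v (tu u) \<and> covers E (Bset E r F v) (Pl E u)) \<and>
      (\<forall>x. anc x (tu u) \<and> covers E (Bset E r F x) (Pl E u) \<longrightarrow> dep x \<le> dep v)"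
    by (rule deepest_ancestor)
  then have "(anc (vu E r F u) (tu u) \<and> covers E (Bset E r F (vu E r F u)) (Pl E u)) \<and>
      (\<forall>x. anc x (tu u) \<and> covers E (Bset E r F x) (Pl E u) \<longrightarrow> dep x \<le> dep (vu E r F u))"
    unfolding vu_def conj_assoc[symmetric] by (rule theI')
  then show "anc (vu E r F u) (tu u)"
    and "\<And>x. anc x (tu u) \<Longrightarrow> covers E (Bset E r F x) (Pl E u) \<Longrightarrow> dep x \<le> dep (vu E r F u)"
    by blast+
qed

lemma chain_covers_path:
  assumes "(k, l) \<in> R\<^sup>*" "l \<in> F" "x \<in> Vl E l" "anc (ap k) w" "w \<noteq> ap k" "anc w x"
  shows "\<exists>\<rho>\<in>F. anc (ap k) (ap \<rho>) \<and> w \<in> Q \<rho>"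
  using assms(1,4,5)
proof (induction rule: converse_rtrancl_induct)
  case base
  then show ?case
    using lower_endsI[OF F_link[OF assms(2)] assms(3) _ _ assms(6)] ancestor_refl apex_in_V F_link assms(2)
    by blast
next
  case (step k k')
  have k: "k \<in> F" and k': "k' \<in> F" using step.hyps arc_ends rtrancl_in_F assms(2) by blast+
  obtain u where u: "u \<in> U" "(k, k') \<in> Au E r Fs u" using arc_rel_iff step.hyps(1) by blast
  have xV: "x \<in> V" using Vl_subset_V F_link assms(2,3) by blast
  have k'x: "anc (ap k') x"
    using ancestor_trans[OF xV rtrancl_apex[OF step.hyps(2) assms(2)]] ancestor_apex F_link assms(2,3)
    by blast
  show ?case
  proof (cases "anc (ap k') w \<and> w \<noteq> ap k'")
    case True
    then obtain \<rho> where "\<rho> \<in> F" "anc (ap k') (ap \<rho>)" "w \<in> Q \<rho>" using step.IH by blast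
    then show ?thesis
      using ancestor_trans[OF apex_in_V[OF F_link] Au_apex_below(1)[OF u]] by blast
  next
    case False
    then have "anc w (ap k')"
      using ancestors_linear[OF xV k'x assms(6)] ancestor_refl apex_in_V F_link k' by blast
    then have "w \<in> Q k"
      using lower_endsI[OF F_link[OF k] lower_endsD(3)[OF F_link[OF k] Au_head_apex_in_tail[OF u]]]
        step.prems by blast
    then show ?thesis using k ancestor_refl apex_in_V F_link by blast
  qed
qed

lemma Fs_lower_ends_nested:
  assumes u: "u \<in> U" and w: "w \<in> Q u" and l: "l \<in> Fs u" "w \<in> Q l" and m: "m \<in> Fs u" "l \<noteq> m"
    and lm: "anc (ap l) (ap m)" and mw: "anc (ap m) w" "w \<noteq> ap m"
  shows "w \<in> Q m"
proof -
  note linkl = Fs_link[OF u l(1)] and linkm = Fs_link[OF u m(1)]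
  obtain z where z: "z \<in> own u m" using own_ends_nonempty[OF u m(1)] by blast
  note zm = lower_endsD[OF linkm own_ends_lower_ends[OF u z]]
  have "\<not> anc z w"
  proof
    assume "anc z w"
    moreover have "anc (ap l) z" using ancestor_trans[OF zm(4) lm zm(1)] .
    moreover have "z \<noteq> ap l"
    proof
      assume "z = ap l"
      then have "anc z (ap m)" using lm by simp
      then show False using ancestor_antisym[OF zm(4) zm(1)] zm(2) by simp
    qed
    ultimately have "z \<in> Q l" using lower_endsI[OF linkl lower_endsD(3)[OF linkl l(2)]] by blast
    then show False using own_ends_other[OF z l(1)] m(2) by blast
  qed
  moreover have "anc w (bu u)" using lower_ends_uplink[OF u] w by blast
  moreover have "anc z (bu u)" using own_ends_between[OF u z] by blast
  ultimately have "anc w z" using ancestors_linear[OF U_ends(2)[OF u]] by blast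
  then show ?thesis using lower_endsI[OF linkm zm(3) mw] by blast
qed

lemma fork_top_below_apex:
  assumes u: "u \<in> U" "u' \<in> U" "u \<noteq> u'"
    and arcs: "(n, l') \<in> Au E r Fs u" "(n, m') \<in> Au E r Fs u'" and above: "anc (ap l') (ap m')"
  shows "anc (ap l') (tu u')"
proof (rule ccontr)
  assume not_above: "\<not> anc (ap l') (tu u')"
  have m': "anc (tu u') (ap m')" "anc (ap m') (bu u')"
    using lower_ends_uplink[OF u(2)] Au_head_apex_in_lower_ends[OF u(2) arcs(2)] by blast+
  have "ap m' \<in> V" using ancestorD(1)[OF U_ends(2)[OF u(2)] m'(2)] .
  then have "anc (tu u') (ap l')" using ancestors_linear[OF _ above m'(1)] not_above by blast
  moreover have "ap l' \<noteq> tu u'"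
  proof
    assume "ap l' = tu u'"
    then show False using not_above ancestor_refl[OF U_ends(3)[OF u(2)]] by simp
  qed
  moreover have "anc (ap l') (bu u')" using ancestor_trans[OF U_ends(2)[OF u(2)] above m'(2)] .
  ultimately have "ap l' \<in> Q u'" using lower_ends_uplink[OF u(2)] by blast
  then show False
    using Au_head_apex_in_lower_ends[OF u(1) arcs(1)] lower_ends_disjoint[OF u] by blast
qed

lemma fork_Bset_covers:
  assumes u: "u \<in> U" "u' \<in> U" "u \<noteq> u'"
    and arcs: "(n, l') \<in> Au E r Fs u" "(n, m') \<in> Au E r Fs u'"
    and reach: "(l', l) \<in> R\<^sup>*" "l \<in> F" "x \<in> Vl E l"
    and apices: "anc (ap l') (ap m')" "ap l' \<noteq> ap m'" "anc (ap m') x"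
  shows "Q u' \<subseteq> \<Union>(Q ` Bset E r F (ap l'))"
proof
  fix w assume wQ: "w \<in> Q u'"
  have w: "anc (tu u') w" "w \<noteq> tu u'" "anc w (bu u')" using lower_ends_uplink[OF u(2)] wQ by blast+
  have wV: "w \<in> V" using ancestorD(1)[OF U_ends(2)[OF u(2)] w(3)] .
  have m'F: "m' \<in> Fs u'" using arcs(2) unfolding Au_iff by blast
  have m': "anc (ap m') (bu u')"
    using lower_ends_uplink[OF u(2)] Au_head_apex_in_lower_ends[OF u(2) arcs(2)] by blast
  have top: "anc (ap l') (tu u')" using fork_top_below_apex[OF u arcs apices(1)] .
  have aw: "anc (ap l') w" using ancestor_trans[OF wV top w(1)] .
  obtain l2 where l2: "l2 \<in> Fs u'" "w \<in> Q l2" using Fs_covers_lower_ends[OF u(2)] wQ by blast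
  note link2 = Fs_link[OF u(2) l2(1)]
  show "w \<in> \<Union>(Q ` Bset E r F (ap l'))"
  proof (cases "anc (ap l') (ap l2)")
    case True
    then show ?thesis using l2 Fs_subset_F[OF u(2)] by (auto simp: Bset_def)
  next
    case False
    have l2w: "anc (ap l2) w" using lower_endsD(1)[OF link2 l2(2)] .
    have l2a: "anc (ap l2) (ap l')" using ancestors_linear[OF wV l2w aw] False by blast
    show ?thesis
    proof (cases "anc w (ap m')")
      case True
      have "w \<noteq> ap l'"
      proof
        assume "w = ap l'"
        then show False using ancestor_antisym[OF wV w(1)] top w(2) by simp
      qed
      moreover have "anc w x" using ancestor_trans[OF _ True apices(3)] Vl_subset_V[OF F_link[OF reach(2)]] reach(3)
        by blast
      ultimately obtain \<rho> where "\<rho> \<in> F" "anc (ap l') (ap \<rho>)" "w \<in> Q \<rho>"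
        using chain_covers_path[OF reach aw] by blast
      then show ?thesis by (auto simp: Bset_def)
    next
      case False
      then have "anc (ap m') w" "w \<noteq> ap m'"
        using ancestors_linear[OF U_ends(2)[OF u(2)] m' w(3)] ancestor_refl[OF wV] by auto
      moreover have "l2 \<noteq> m'"
      proof
        assume "l2 = m'"
        then have "anc (ap m') (ap l')" using l2a by simp
        then show False
          using ancestor_antisym[OF ancestorD(1)[OF U_ends(2)[OF u(2)] m'] apices(1)] apices(2) by simp
      qed
      ultimately have "w \<in> Q m'"
        using Fs_lower_ends_nested[OF u(2) wQ l2 m'F _ ancestor_trans[OF _ l2a apices(1)]]
          ancestorD(1)[OF U_ends(2)[OF u(2)] m'] by blast
      moreover have "m' \<in> Bset E r F (ap l')"
        using m'F Fs_subset_F[OF u(2)] apices(1) by (auto simp: Bset_def)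
      ultimately show ?thesis by blast
    qed
  qed
qed

text \<open>The maximality of \<open>v\<^sub>u\<^sub>'\<close> rules out such forks.\<close>

lemma fork_impossible:
  assumes u: "u \<in> U" "u' \<in> U" "u \<noteq> u'"
    and arcs: "(n, l') \<in> Au E r Fs u" "(n, m') \<in> Au E r Fs u'"
    and reach: "(l', l) \<in> R\<^sup>*" "l \<in> F" "x \<in> Vl E l"
    and apices: "anc (ap l') (ap m')" "ap l' \<noteq> ap m'" "anc (ap m') x"
  shows False
proof -
  have "\<And>l. l \<in> Bset E r F (ap l') \<Longrightarrow> is_link V l" using F_link by (auto simp: Bset_def)
  then have "covers E (Bset E r F (ap l')) (Pl E u')"
    using covers_iff_lower_ends[OF U_link[OF u(2)]] fork_Bset_covers[OF assms] by blast
  then have "dep (ap l') \<le> dep (vu E r F u')"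
    using vu(2)[OF u(2) fork_top_below_apex[OF u arcs apices(1)]] by blast
  moreover have n: "n \<in> Fs u'" using arcs(2) unfolding Au_iff by blast
  then have "anc (vu E r F u') (ap n)" using Fs_subset_Bset[OF u(2)] by (auto simp: Bset_def)
  then have "dep (vu E r F u') \<le> dep (ap n)"
    using ancestorD(2)[OF apex_in_V[OF Fs_link[OF u(2) n]]] by blast
  moreover have "dep (ap n) < dep (ap l')" using Au_apex_below(2)[OF u(1) arcs(1)] .
  ultimately show False by simp
qed

lemma links_through_vertex_comparable:
  assumes "(\<rho>, l) \<in> R\<^sup>*" "(\<rho>, m) \<in> R\<^sup>*" "l \<in> F" "m \<in> F" "x \<in> Vl E l" "x \<in> Vl E m"
  shows "(l, m) \<in> R\<^sup>* \<or> (m, l) \<in> R\<^sup>*"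
proof (rule ccontr)
  assume incomparable: "\<not> ((l, m) \<in> R\<^sup>* \<or> (m, l) \<in> R\<^sup>*)"
  then obtain n l' m' where fork: "(n, l') \<in> R" "(n, m') \<in> R" "l' \<noteq> m'" "(l', l) \<in> R\<^sup>*" "(m', m) \<in> R\<^sup>*"
    using comparable_or_fork[OF assms(1,2)] by blast
  obtain u u' where u: "u \<in> U" "(n, l') \<in> Au E r Fs u" and u': "u' \<in> U" "(n, m') \<in> Au E r Fs u'"
    using fork(1,2) arc_rel_iff by blast
  have uu': "u \<noteq> u'" using Au_head_unique[OF u(1,2)] u'(2) fork(3) by blast
  have xV: "x \<in> V" using Vl_subset_V[OF F_link[OF assms(3)]] assms(5) by blast
  have l'x: "anc (ap l') x"
    using ancestor_trans[OF xV rtrancl_apex[OF fork(4) assms(3)] ancestor_apex[OF F_link[OF assms(3)] assms(5)]] .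
  have m'x: "anc (ap m') x"
    using ancestor_trans[OF xV rtrancl_apex[OF fork(5) assms(4)] ancestor_apex[OF F_link[OF assms(4)] assms(6)]] .
  have "ap l' \<noteq> ap m'"
    using Au_head_apex_in_lower_ends[OF u] Au_head_apex_in_lower_ends[OF u'] lower_ends_disjoint[OF u(1) u'(1) uu']
    by auto
  then show False
    using ancestors_linear[OF xV l'x m'x]
      fork_impossible[OF u(1) u'(1) uu' u(2) u'(2) fork(4) assms(3,5) _ _ m'x]
      fork_impossible[OF u'(1) u(1) uu'[symmetric] u'(2) u(2) fork(5) assms(4,6) _ _ l'x]
    by metis
qed

lemma same_label_on_chain_impossible:
  assumes u: "u \<in> U" and arcs: "(l1, t1) \<in> Au E r Fs u" "(l2, t2) \<in> Au E r Fs u"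
    and "l1 \<noteq> l2" "(l1, l2) \<in> R\<^sup>*" and reach: "(t1, \<mu>) \<in> R\<^sup>*" "(l2, \<mu>) \<in> R\<^sup>*" "(t2, \<mu>) \<in> R\<^sup>*"
    and \<mu>: "\<mu> \<in> F" "x \<in> Vl E \<mu>" and x: "x \<in> Vl E l1"
  shows False
proof -
  have l: "l1 \<in> Fs u" "l2 \<in> Fs u" using arcs unfolding Au_iff by blast+
  have l2F: "l2 \<in> F" using Fs_subset_F[OF u] l(2) by blast
  have l1t1: "(l1, t1) \<in> R" using arc_rel_iff u arcs(1) by blast
  have "(t1, l2) \<in> R\<^sup>*"
  proof (rule ccontr)
    assume "(t1, l2) \<notin> R\<^sup>*"
    then have "(l2, t1) \<in> R\<^sup>*" "l2 \<noteq> t1" using predecessors_comparable[OF reach(1,2)] by auto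
    then have "(l2, l1) \<in> R\<^sup>*" using in_arc_rtrancl_unique l1t1 by blast
    then show False using rtrancl_antisym \<open>(l1, l2) \<in> R\<^sup>*\<close> \<open>l1 \<noteq> l2\<close> by blast
  qed
  then have t1l2: "anc (ap t1) (ap l2)" "dep (ap t1) \<le> dep (ap l2)"
    using rtrancl_apex l2F rank_rtrancl by blast+
  obtain q where q: "q \<in> own u l2" using own_ends_nonempty[OF u l(2)] by blast
  note ql2 = lower_endsD[OF Fs_link[OF u l(2)] own_ends_lower_ends[OF u q]]
  have xV: "x \<in> V" using Vl_subset_V[OF F_link[OF \<mu>(1)]] \<mu>(2) by blast
  have "anc (ap t2) x"
    using ancestor_trans[OF xV rtrancl_apex[OF reach(3) \<mu>(1)] ancestor_apex[OF F_link[OF \<mu>(1)] \<mu>(2)]] .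
  then have qx: "anc q x" using ancestor_trans[OF xV Au_tail_own_above_head_apex[OF u arcs(2) q]] by blast
  have "anc (ap l1) q"
    using ancestor_trans[OF ql2(4) Au_apex_below(1)[OF u arcs(1)] ancestor_trans[OF ql2(4) t1l2(1) ql2(1)]] .
  moreover have "dep (ap l1) < dep q"
    using Au_apex_below(2)[OF u arcs(1)] t1l2(2) depth_strict_mono[OF ql2(4) ql2(1)] ql2(2) by fastforce
  ultimately have "q \<in> Q l1" using lower_endsI[OF Fs_link[OF u l(1)] x _ _ qx] by blast
  then show False using own_ends_other[OF q l(1)] \<open>l1 \<noteq> l2\<close> by blast
qed

lemma same_label_on_chain:
  assumes arcs: "(u, l1, t1) \<in> dep_arcs E r Fs U" "(u, l2, t2) \<in> dep_arcs E r Fs U"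
    and reach: "(t1, \<mu>) \<in> R\<^sup>*" "(t2, \<mu>) \<in> R\<^sup>*" and \<mu>: "\<mu> \<in> F" "x \<in> Vl E \<mu>"
    and x: "x \<in> Vl E l1" "x \<in> Vl E l2"
  shows "l1 = l2"
proof (rule ccontr)
  assume ne: "l1 \<noteq> l2"
  have u: "u \<in> U" "(l1, t1) \<in> Au E r Fs u" "(l2, t2) \<in> Au E r Fs u"
    using arcs by (auto simp: dep_arcs_def)
  have "(l1, t1) \<in> R" "(l2, t2) \<in> R" using arcs by (auto simp: arc_rel_def)
  then have "(l1, \<mu>) \<in> R\<^sup>*" "(l2, \<mu>) \<in> R\<^sup>*" using reach by (meson converse_rtrancl_into_rtrancl)+
  then show False
    using predecessors_comparable
      same_label_on_chain_impossible[OF u(1,2,3) ne _ reach(1) _ reach(2) \<mu> x(1)]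
      same_label_on_chain_impossible[OF u(1,3,2) ne[symmetric] _ reach(2) _ reach(1) \<mu> x(2)]
    by blast
qed

lemma finite_F: "finite F"
proof -
  have "F \<subseteq> Pow V" using F_link by (auto simp: is_link_def)
  moreover have "finite V" using tree by (simp add: is_tree_def)
  ultimately show ?thesis by (meson finite_Pow_iff finite_subset)
qed

lemma card_links_through_vertex:
  assumes C: "C = {y. (\<rho>, y) \<in> R\<^sup>*}" and \<rho>: "\<rho> \<in> F"
    and paths: "\<forall>as. dipath (comp_arcs (dep_arcs E r Fs U) C) as \<longrightarrow>
                  card {u\<in>U. \<exists>a\<in>set as. fst a = u} \<le> k"
  shows "card {l\<in>C. x \<in> Vl E l} \<le> k + 1"
proof -
  define S where "S = {l\<in>C. x \<in> Vl E l}"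
  have CF: "C \<subseteq> F" using C rtrancl_in_N \<rho> by blast
  then have S: "S \<subseteq> C" "finite S" using finite_subset[OF _ finite_F] by (auto simp: S_def)
  have chain: "(l, m) \<in> R\<^sup>* \<or> (m, l) \<in> R\<^sup>*" if "l \<in> S" "m \<in> S" for l m
  proof -
    have "(\<rho>, l) \<in> R\<^sup>*" "(\<rho>, m) \<in> R\<^sup>*" "l \<in> F" "m \<in> F" "x \<in> Vl E l" "x \<in> Vl E m"
      using that C CF by (auto simp: S_def)
    then show ?thesis by (rule links_through_vertex_comparable)
  qed
  show ?thesis
  proof (cases "2 \<le> card S")
    case True
    obtain \<mu> as where \<mu>: "\<mu> \<in> S" and path: "dipath (comp_arcs (dep_arcs E r Fs U) C) as"
      and tails: "\<forall>l\<in>S - {\<mu>}. \<exists>a\<in>set as. fst (snd a) = l \<and> (snd (snd a), \<mu>) \<in> R\<^sup>*"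
      using chain_on_dipath[OF C S chain True] by blast
    have asD: "set as \<subseteq> dep_arcs E r Fs U" using path by (auto simp: dipath_def comp_arcs_def)
    have "card (S - {\<mu>}) \<le> card (fst ` set as)"
    proof (rule card_tails_le_card_labels[OF tails])
      fix a b assume ab: "a \<in> set as" "b \<in> set as" and reach: "(snd (snd a), \<mu>) \<in> R\<^sup>*" "(snd (snd b), \<mu>) \<in> R\<^sup>*"
        and tails: "fst (snd a) \<in> S - {\<mu>}" "fst (snd b) \<in> S - {\<mu>}" and "fst a = fst b"
      have arc_a: "(fst a, fst (snd a), snd (snd a)) \<in> dep_arcs E r Fs U" using ab(1) asD by auto
      have arc_b: "(fst a, fst (snd b), snd (snd b)) \<in> dep_arcs E r Fs U"
        using ab(2) asD \<open>fst a = fst b\<close> by auto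
      have "\<mu> \<in> F" "x \<in> Vl E \<mu>" "x \<in> Vl E (fst (snd a))" "x \<in> Vl E (fst (snd b))"
        using \<mu> tails CF by (auto simp: S_def)
      then show "fst (snd a) = fst (snd b)" by (rule same_label_on_chain[OF arc_a arc_b reach])
    qed
    also have "fst ` set as = {u\<in>U. \<exists>a\<in>set as. fst a = u}" using asD by (force simp: dep_arcs_def)
    also have "card \<dots> \<le> k" using paths path by blast
    finally show ?thesis using \<mu> S(2) by (simp add: S_def[symmetric])
  qed (simp add: S_def[symmetric])
qed

end

theorem lemma14:
  fixes V :: "'a set" and E :: "'a set set" and L :: "'a set set" and w :: "'a set \<Rightarrow> real"
    and r :: 'a and F :: "'a set set" and U :: "'a set set"
    and Fs :: "'a set \<Rightarrow> 'a set set" and C :: "'a set set" and k :: nat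
  assumes inst: "wtap_instance V E L w"
    and root: "r \<in> V"
    and sol: "wtap_solution E L F"
    and Fsel: "valid_Fsel E r F U Fs"
    and Uup: "U \<subseteq> Lup E r L"
    and disj: "\<forall>u1\<in>U. \<forall>u2\<in>U. u1 \<noteq> u2 \<longrightarrow> Pl E u1 \<inter> Pl E u2 = {}"
    and comp: "weak_component F (dep_arcs E r Fs U) C"
    and paths: "\<forall>as. dipath (comp_arcs (dep_arcs E r Fs U) C) as \<longrightarrow>
                  card {u\<in>U. \<exists>a\<in>set as. fst a = u} \<le> k"
  shows "thin V E (k + 1) C"
proof -
  interpret dependency_graph V E r L F U Fs
    using inst root sol Fsel Uup disj
    by unfold_locales (simp_all add: wtap_instance_def)
  obtain \<rho> where "\<rho> \<in> F" "C = {y. (\<rho>, y) \<in> (arc_rel (dep_arcs E r Fs U))\<^sup>*}"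
    using weak_component_rooted[OF comp] .
  then show ?thesis
    unfolding thin_def using card_links_through_vertex[OF _ _ paths] by blast
qed

end
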